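(* Let $\gamma$ be a curve of finite total curvature in $\mathbb{E}^d$, parametrized by arclength, and let $r=\gamma(s_0)$ be a point of $\gamma$ (not an endpoint, if $\gamma$ is an arc). Then $$\limsup_{p,q\to r}\delta(p,q)=\sec\frac{\alpha(r)}{2},$$ and this limit superior is realized by symmetric pairs $p=\gamma(s_0-h)$, $q=\gamma(s_0+h)$ with $h\to0^+$.
   Context: For distinct points $p,q$ on $\gamma$, $\delta(p,q)=\mathrm{Len}(p,q)/|p-q|$, where $\mathrm{Len}(p,q)$ is the (shorter) arclength distance along $\gamma$ between $p$ and $q$. A curve has finite total curvature if the supremum over inscribed polygons of the sum of turning angles at interior vertices is finite (turning angle at $v_n$: the angle in $[0,\pi]$ between $v_n-v_{n-1}$ and $v_{n+1}-v_n$). Such a curve is rectifiable and has well-defined one-sided unit tangent vectors $T_-(r)$ (incoming) and $T_+(r)$ (outgoing) at every point; $\alpha(r)\in[0,\pi]$ denotes the angle between $T_-(r)$ and $T_+(r)$ (the turning angle at $r$), which is $0$ when $r$ is not a corner. Here $\sec(\pi/2)=+\infty$. *)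

theory Defs
  imports "HOL-Analysis.Analysis"
begin

definition vangle :: "'a::euclidean_space \<Rightarrow> 'a \<Rightarrow> real" where
  "vangle u v = arccos ((u \<bullet> v) / (norm u * norm v))"

definition curve_length :: "(real \<Rightarrow> 'a::euclidean_space) \<Rightarrow> real \<Rightarrow> real \<Rightarrow> ereal" where
  "curve_length \<gamma> a b =
     (SUP nt \<in> {(n::nat, t::nat \<Rightarrow> real). t 0 = a \<and> t n = b \<and> (\<forall>i<n. t i \<le> t (Suc i))}.
        ereal (\<Sum>i<fst nt. dist (\<gamma> (snd nt i)) (\<gamma> (snd nt (Suc i)))))"

text \<open>Parameter domain: [0,L) for a closed curve (periodic of period L), [0,L] for an arc.\<close>
definition pdom :: "real \<Rightarrow> bool \<Rightarrow> real set" where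
  "pdom L cl = (if cl then {0..<L} else {0..L})"

definition simple_curve :: "(real \<Rightarrow> 'a::euclidean_space) \<Rightarrow> real \<Rightarrow> bool \<Rightarrow> bool" where
  "simple_curve \<gamma> L cl \<longleftrightarrow> 0 < L \<and>
     (if cl then continuous_on UNIV \<gamma> \<and> (\<forall>s. \<gamma> (s + L) = \<gamma> s) \<and> inj_on \<gamma> {0..<L}
      else continuous_on {0..L} \<gamma> \<and> inj_on \<gamma> {0..L})"

definition arclength_param :: "(real \<Rightarrow> 'a::euclidean_space) \<Rightarrow> real \<Rightarrow> bool" where
  "arclength_param \<gamma> L \<longleftrightarrow>
     (\<forall>s t. 0 \<le> s \<and> s \<le> t \<and> t \<le> L \<longrightarrow> curve_length \<gamma> s t = ereal (t - s))"

text \<open>Total curvature: supremum over inscribed polygons of the sum of turning angles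
  at interior vertices (open polygons for arcs, cl polygons for cl curves).\<close>
definition total_curvature :: "(real \<Rightarrow> 'a::euclidean_space) \<Rightarrow> real \<Rightarrow> bool \<Rightarrow> ereal" where
  "total_curvature \<gamma> L cl =
    (if cl then
       (SUP nt \<in> {(n::nat, t::nat \<Rightarrow> real). 3 \<le> n \<and> 0 \<le> t 0 \<and> t (n - 1) < L \<and>
                    (\<forall>i. Suc i < n \<longrightarrow> t i < t (Suc i))}.
          ereal (\<Sum>i<fst nt.
             vangle (\<gamma> (snd nt i) - \<gamma> (snd nt ((i + fst nt - 1) mod fst nt)))
                    (\<gamma> (snd nt ((i + 1) mod fst nt)) - \<gamma> (snd nt i))))
     else
       (SUP nt \<in> {(n::nat, t::nat \<Rightarrow> real). 0 \<le> t 0 \<and> t n \<le> L \<and>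
                    (\<forall>i<n. t i < t (Suc i))}.
          ereal (\<Sum>i\<in>{1..<fst nt}.
             vangle (\<gamma> (snd nt i) - \<gamma> (snd nt (i - 1)))
                    (\<gamma> (snd nt (Suc i)) - \<gamma> (snd nt i)))))"

definition finite_total_curvature :: "(real \<Rightarrow> 'a::euclidean_space) \<Rightarrow> real \<Rightarrow> bool \<Rightarrow> bool" where
  "finite_total_curvature \<gamma> L cl \<longleftrightarrow> total_curvature \<gamma> L cl < \<infinity>"

definition param_of :: "(real \<Rightarrow> 'a) \<Rightarrow> real \<Rightarrow> bool \<Rightarrow> 'a \<Rightarrow> real" where
  "param_of \<gamma> L cl p = (THE s. s \<in> pdom L cl \<and> \<gamma> s = p)"

definition Len :: "(real \<Rightarrow> 'a) \<Rightarrow> real \<Rightarrow> bool \<Rightarrow> 'a \<Rightarrow> 'a \<Rightarrow> real" where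
  "Len \<gamma> L cl p q =
    (let d = \<bar>param_of \<gamma> L cl p - param_of \<gamma> L cl q\<bar>
     in if cl then min d (L - d) else d)"

definition distortion :: "(real \<Rightarrow> 'a::euclidean_space) \<Rightarrow> real \<Rightarrow> bool \<Rightarrow> 'a \<Rightarrow> 'a \<Rightarrow> real" where
  "distortion \<gamma> L cl p q = Len \<gamma> L cl p q / dist p q"

definition T_plus :: "(real \<Rightarrow> 'a::euclidean_space) \<Rightarrow> real \<Rightarrow> 'a" where
  "T_plus \<gamma> s = Lim (at_right 0) (\<lambda>h. (\<gamma> (s + h) - \<gamma> s) /\<^sub>R h)"

definition T_minus :: "(real \<Rightarrow> 'a::euclidean_space) \<Rightarrow> real \<Rightarrow> 'a" where
  "T_minus \<gamma> s = Lim (at_right 0) (\<lambda>h. (\<gamma> s - \<gamma> (s - h)) /\<^sub>R h)"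

definition turn_angle :: "(real \<Rightarrow> 'a::euclidean_space) \<Rightarrow> real \<Rightarrow> real" where
  "turn_angle \<gamma> s = vangle (T_minus \<gamma> s) (T_plus \<gamma> s)"

definition esec :: "real \<Rightarrow> ereal" where
  "esec x = (if cos x = 0 then \<infinity> else ereal (1 / cos x))"

end

theory Submission
  imports Defs
begin

text \<open>
  Near a point of finite total curvature each of the two branches \<open>h \<mapsto> \<gamma> (s0 \<plusminus> h)\<close> is an
  arc parametrised by arclength whose inscribed polygons have bounded turning. On such an arc the
  directions of short chords are almost constant, since otherwise polygons of large turning could
  be stacked at ever smaller scales; hence chords are almost as long as arcs, and the one-sided
  unit tangents \<open>T\<^sub>-\<close>, \<open>T\<^sub>+\<close> exist. A chord from \<open>\<gamma> (s0 - h\<^sub>1)\<close> to \<open>\<gamma> (s0 + h\<^sub>2)\<close> is close to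
  \<open>h\<^sub>1 T\<^sub>- + h\<^sub>2 T\<^sub>+\<close>, whose length is at least \<open>cos (\<alpha>/2) (h\<^sub>1 + h\<^sub>2)\<close>, with equality for
  \<open>h\<^sub>1 = h\<^sub>2\<close>. So near \<open>\<gamma> s0\<close> the distortion is at most about \<open>sec (\<alpha>/2)\<close>, and the symmetric
  pairs attain this value in the limit.
\<close>

section \<open>Angles between vectors\<close>

lemma inner_div_norms_bounds:
  fixes u v :: "'a::euclidean_space"
  shows "-1 \<le> (u \<bullet> v) / (norm u * norm v) \<and> (u \<bullet> v) / (norm u * norm v) \<le> 1"
proof (cases "u = 0 \<or> v = 0")
  case False
  then have "0 < norm u * norm v" by auto
  moreover have "\<bar>u \<bullet> v\<bar> \<le> norm u * norm v" by (rule Cauchy_Schwarz_ineq2)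
  ultimately show ?thesis by (auto simp: divide_simps abs_le_iff)
qed auto

lemma vangle_nonneg: "0 \<le> vangle u v"
  unfolding vangle_def using inner_div_norms_bounds[of u v] arccos_lbound by blast

lemma vangle_le_pi: "vangle u v \<le> pi"
  unfolding vangle_def using inner_div_norms_bounds[of u v] arccos_ubound by blast

lemma vangle_uminus: "vangle (- v) (- u) = vangle u v"
  unfolding vangle_def by (simp add: inner_commute mult.commute)

lemma cos_vangle: "cos (vangle u v) = (u \<bullet> v) / (norm u * norm v)"
  unfolding vangle_def using inner_div_norms_bounds[of u v] by (simp add: cos_arccos)

lemma cos_vangle_unit: "norm u = 1 \<Longrightarrow> norm v = 1 \<Longrightarrow> cos (vangle u v) = u \<bullet> v"
  by (simp add: cos_vangle)

lemma cos_half_vangle_nonneg: "0 \<le> cos (vangle u v / 2)"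
  using vangle_nonneg[of u v] vangle_le_pi[of u v] by (intro cos_ge_zero) auto

lemma inner_unit_vectors_eq:
  fixes x y :: "'a::real_inner"
  assumes "norm x = 1" "norm y = 1"
  shows "x \<bullet> y = 1 - (norm (x - y))\<^sup>2 / 2"
proof -
  have "(norm (x - y))\<^sup>2 = x \<bullet> x + y \<bullet> y - 2 * (x \<bullet> y)"
    by (simp add: power2_norm_eq_inner inner_diff_left inner_diff_right inner_commute)
  with assms show ?thesis by (simp add: dot_square_norm field_simps)
qed

text \<open>The chord of the unit circle is shorter than the arc: \<open>\<bar>sgn u - sgn v\<bar> = 2 sin (\<theta>/2) \<le> \<theta>\<close>.\<close>
lemma norm_sgn_diff_le_vangle:
  fixes u v :: "'a::euclidean_space"
  assumes "u \<noteq> 0" "v \<noteq> 0"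
  shows "norm (sgn u - sgn v) \<le> vangle u v"
proof -
  define \<theta> where "\<theta> = vangle u v"
  have "cos \<theta> = sgn u \<bullet> sgn v"
    using assms unfolding \<theta>_def cos_vangle sgn_div_norm by (simp add: field_simps)
  also have "\<dots> = 1 - (norm (sgn u - sgn v))\<^sup>2 / 2"
    using assms by (intro inner_unit_vectors_eq) (simp_all add: norm_sgn)
  finally have "(norm (sgn u - sgn v))\<^sup>2 = 4 * (sin (\<theta>/2))\<^sup>2"
    using cos_double_sin[of "\<theta>/2"] by simp
  also have "\<dots> \<le> \<theta>\<^sup>2"
    using abs_le_square_iff[of "2 * sin (\<theta>/2)" \<theta>] abs_sin_x_le_abs_x[of "\<theta>/2"]
    by (simp add: power_mult_distrib abs_mult)
  finally show ?thesis
    using vangle_nonneg unfolding \<theta>_def by (meson power2_le_imp_le)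
qed

lemma norm_add_unit_vectors:
  fixes u v :: "'a::euclidean_space"
  assumes "norm u = 1" "norm v = 1"
  shows "norm (u + v) = 2 * cos (vangle u v / 2)"
proof -
  have "(norm (u + v))\<^sup>2 = u \<bullet> u + v \<bullet> v + 2 * (u \<bullet> v)"
    by (simp add: power2_norm_eq_inner inner_add_left inner_add_right inner_commute)
  also have "\<dots> = 2 + 2 * cos (vangle u v)"
    using assms by (simp add: cos_vangle_unit dot_square_norm)
  also have "\<dots> = (2 * cos (vangle u v / 2))\<^sup>2"
    using cos_double_cos[of "vangle u v / 2"] by (simp add: power_mult_distrib)
  finally show ?thesis
    by (rule power2_eq_imp_eq) (simp_all add: cos_half_vangle_nonneg)
qed

text \<open>Writing \<open>x = cos \<theta> = 2c\<^sup>2 - 1\<close>, the difference of the squares of the two sides is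
  \<open>(1 - x) (h\<^sub>1 - h\<^sub>2)\<^sup>2 / 2 \<ge> 0\<close>.\<close>
lemma cos_half_vangle_mult_le_norm:
  fixes u v :: "'a::euclidean_space"
  assumes "norm u = 1" "norm v = 1" "0 \<le> h\<^sub>1" "0 \<le> h\<^sub>2"
  shows "cos (vangle u v / 2) * (h\<^sub>1 + h\<^sub>2) \<le> norm (h\<^sub>1 *\<^sub>R u + h\<^sub>2 *\<^sub>R v)"
proof -
  define c where "c = cos (vangle u v / 2)"
  define x where "x = u \<bullet> v"
  have x: "x = 2 * c\<^sup>2 - 1"
    using cos_double_cos[of "vangle u v / 2"] assms unfolding c_def x_def
    by (simp add: cos_vangle_unit)
  have "x \<le> 1"
    using assms Cauchy_Schwarz_ineq2[of u v] unfolding x_def by simp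
  have "h\<^sub>1\<^sup>2 + h\<^sub>2\<^sup>2 + 2 * h\<^sub>1 * h\<^sub>2 * x - (c * (h\<^sub>1 + h\<^sub>2))\<^sup>2 = (1 - x) * (h\<^sub>1 - h\<^sub>2)\<^sup>2 / 2"
    unfolding x by (simp add: power2_eq_square algebra_simps)
  moreover have "0 \<le> (1 - x) * (h\<^sub>1 - h\<^sub>2)\<^sup>2 / 2" using \<open>x \<le> 1\<close> by simp
  ultimately have "(c * (h\<^sub>1 + h\<^sub>2))\<^sup>2 \<le> h\<^sub>1\<^sup>2 + h\<^sub>2\<^sup>2 + 2 * h\<^sub>1 * h\<^sub>2 * x" by linarith
  also have "\<dots> = (norm (h\<^sub>1 *\<^sub>R u + h\<^sub>2 *\<^sub>R v))\<^sup>2"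
  proof -
    have "(norm (h\<^sub>1 *\<^sub>R u + h\<^sub>2 *\<^sub>R v))\<^sup>2 = (h\<^sub>1 *\<^sub>R u + h\<^sub>2 *\<^sub>R v) \<bullet> (h\<^sub>1 *\<^sub>R u + h\<^sub>2 *\<^sub>R v)"
      by (rule power2_norm_eq_inner)
    also have "\<dots> = h\<^sub>1\<^sup>2 * (u \<bullet> u) + h\<^sub>2\<^sup>2 * (v \<bullet> v) + 2 * h\<^sub>1 * h\<^sub>2 * (u \<bullet> v)"
      by (simp add: inner_add_left inner_add_right inner_commute power2_eq_square algebra_simps)
    finally show ?thesis using assms unfolding x_def by (simp add: dot_square_norm)
  qed
  finally have "(c * (h\<^sub>1 + h\<^sub>2))\<^sup>2 \<le> (norm (h\<^sub>1 *\<^sub>R u + h\<^sub>2 *\<^sub>R v))\<^sup>2" .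
  then have "c * (h\<^sub>1 + h\<^sub>2) \<le> norm (h\<^sub>1 *\<^sub>R u + h\<^sub>2 *\<^sub>R v)"
    by (rule power2_le_imp_le) simp
  then show ?thesis unfolding c_def .
qed

lemma norm_mult_le_inner_unit:
  fixes u v :: "'a::euclidean_space"
  assumes "norm u = 1"
  shows "(1 - norm (sgn v - u)) * norm v \<le> v \<bullet> u"
proof (cases "v = 0")
  case False
  define d where "d = norm (sgn v - u)"
  have "d \<le> norm (sgn v) + norm u"
    unfolding d_def by (rule norm_triangle_ineq4)
  then have "d \<le> 2" using False assms by (simp add: norm_sgn)
  moreover have "0 \<le> d" unfolding d_def by simp
  ultimately have "1 - d \<le> 1 - d\<^sup>2 / 2"
    using mult_left_mono[of d 2 d] by (simp add: power2_eq_square)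
  also have "1 - d\<^sup>2 / 2 = sgn v \<bullet> u"
    using False assms unfolding d_def by (intro inner_unit_vectors_eq[symmetric]) (simp_all add: norm_sgn)
  finally have "(1 - d) * norm v \<le> (sgn v \<bullet> u) * norm v" by (simp add: mult_right_mono)
  also have "\<dots> = v \<bullet> u" using False by (simp add: sgn_div_norm)
  finally show ?thesis unfolding d_def .
qed simp

lemma norm_sum_ge_if_sgn_close:
  fixes v :: "'i \<Rightarrow> 'a::euclidean_space"
  assumes "norm u = 1" "\<And>i. i \<in> I \<Longrightarrow> v i \<noteq> 0 \<Longrightarrow> norm (sgn (v i) - u) \<le> \<eta>"
  shows "(1 - \<eta>) * (\<Sum>i\<in>I. norm (v i)) \<le> norm (\<Sum>i\<in>I. v i)"
proof -
  have "(1 - \<eta>) * (\<Sum>i\<in>I. norm (v i)) \<le> (\<Sum>i\<in>I. v i \<bullet> u)"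
    unfolding sum_distrib_left
  proof (rule sum_mono)
    fix i assume "i \<in> I"
    then have "(1 - \<eta>) * norm (v i) \<le> (1 - norm (sgn (v i) - u)) * norm (v i)"
      using assms(2) by (cases "v i = 0") (auto intro: mult_right_mono)
    also have "\<dots> \<le> v i \<bullet> u" by (rule norm_mult_le_inner_unit[OF assms(1)])
    finally show "(1 - \<eta>) * norm (v i) \<le> v i \<bullet> u" .
  qed
  also have "\<dots> = (\<Sum>i\<in>I. v i) \<bullet> u" by (simp add: inner_sum_left)
  also have "\<dots> \<le> norm (\<Sum>i\<in>I. v i)"
    using norm_cauchy_schwarz[of "\<Sum>i\<in>I. v i" u] assms(1) by simp
  finally show ?thesis .
qed

section \<open>Inscribed polygons and arclength\<close>

definition polygon_turning :: "(real \<Rightarrow> 'a::euclidean_space) \<Rightarrow> nat \<Rightarrow> (nat \<Rightarrow> real) \<Rightarrow> real" where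
  "polygon_turning g n t =
     (\<Sum>i\<in>{1..<n}. vangle (g (t i) - g (t (i - 1))) (g (t (Suc i)) - g (t i)))"

definition polygon_length :: "(real \<Rightarrow> 'a::metric_space) \<Rightarrow> nat \<Rightarrow> (nat \<Rightarrow> real) \<Rightarrow> real" where
  "polygon_length g n t = (\<Sum>i<n. dist (g (t i)) (g (t (Suc i))))"

definition is_partition :: "nat \<Rightarrow> (nat \<Rightarrow> real) \<Rightarrow> real \<Rightarrow> real \<Rightarrow> bool" where
  "is_partition n t a b \<longleftrightarrow> t 0 = a \<and> t n = b \<and> (\<forall>i<n. t i \<le> t (Suc i))"

definition strict_partition :: "nat \<Rightarrow> (nat \<Rightarrow> real) \<Rightarrow> real set \<Rightarrow> bool" where
  "strict_partition n t S \<longleftrightarrow> (\<forall>i<n. t i < t (Suc i)) \<and> (\<forall>i\<le>n. t i \<in> S)"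

definition join_partitions :: "nat \<Rightarrow> (nat \<Rightarrow> real) \<Rightarrow> (nat \<Rightarrow> real) \<Rightarrow> nat \<Rightarrow> real" where
  "join_partitions m q p i = (if i \<le> m then q i else p (i - Suc m))"

lemma polygon_turning_nonneg: "0 \<le> polygon_turning g n t"
  unfolding polygon_turning_def by (intro sum_nonneg) (simp add: vangle_nonneg)

lemma polygon_turning_shift:
  "polygon_turning (\<lambda>h. g (c + h)) n t = polygon_turning g n (\<lambda>i. c + t i)"
  unfolding polygon_turning_def ..

lemma polygon_turning_reflect:
  "polygon_turning (\<lambda>h. g (c - h)) n t = polygon_turning g n (\<lambda>i. c - t (n - i))"
  unfolding polygon_turning_def
proof (rule sum.reindex_bij_witness[of _ "\<lambda>j. n - j" "\<lambda>i. n - i"])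
  fix i assume i: "i \<in> {1..<n}"
  then have e: "n - (n - i - 1) = Suc i" "n - Suc (n - i) = i - 1" "n - (n - i) = i" by auto
  show "vangle (g (c - t (n - (n - i))) - g (c - t (n - (n - i - 1))))
          (g (c - t (n - Suc (n - i))) - g (c - t (n - (n - i)))) =
        vangle (g (c - t i) - g (c - t (i - 1))) (g (c - t (Suc i)) - g (c - t i))"
    unfolding e
    using vangle_uminus[of "g (c - t (Suc i)) - g (c - t i)" "g (c - t i) - g (c - t (i - 1))"]
    by (simp only: minus_diff_eq)
qed auto

text \<open>The turning angles at the two junction vertices are simply dropped.\<close>
lemma polygon_turning_join:
  "polygon_turning g m q + polygon_turning g n p \<le> polygon_turning g (m + Suc n) (join_partitions m q p)"
proof -
  let ?R = "join_partitions m q p"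
  define f where "f i = vangle (g (?R i) - g (?R (i - 1))) (g (?R (Suc i)) - g (?R i))" for i
  have q: "(\<Sum>i\<in>{1..<m}. f i) = polygon_turning g m q"
    unfolding polygon_turning_def f_def join_partitions_def by (intro sum.cong) auto
  have "(\<Sum>i\<in>{1 + Suc m..<n + Suc m}. f i) = (\<Sum>j\<in>{1..<n}. f (j + Suc m))"
    by (rule sum.shift_bounds_nat_ivl)
  also have "\<dots> = polygon_turning g n p"
    unfolding polygon_turning_def f_def join_partitions_def
    by (intro sum.cong refl) (auto simp: Suc_diff_le)
  finally have p: "(\<Sum>i\<in>{1 + Suc m..<n + Suc m}. f i) = polygon_turning g n p" .
  have "{1..<m} \<inter> {1 + Suc m..<n + Suc m} = {}" by auto
  then have "polygon_turning g m q + polygon_turning g n p = (\<Sum>i\<in>{1..<m} \<union> {1 + Suc m..<n + Suc m}. f i)"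
    by (simp only: q p sum.union_disjoint finite_atLeastLessThan)
  also have "\<dots> \<le> (\<Sum>i\<in>{1..<m + Suc n}. f i)"
    by (rule sum_mono2) (auto simp: f_def vangle_nonneg)
  also have "\<dots> = polygon_turning g (m + Suc n) ?R"
    unfolding polygon_turning_def f_def ..
  finally show ?thesis .
qed

lemma strict_partition_join:
  assumes "strict_partition m q S" "strict_partition n p S" "q m < p 0"
  shows "strict_partition (m + Suc n) (join_partitions m q p) S"
  unfolding strict_partition_def
proof safe
  fix i assume i: "i < m + Suc n"
  consider "i < m" | "i = m" | "m < i" by linarith
  then show "join_partitions m q p i < join_partitions m q p (Suc i)"
  proof cases
    case 3
    then have "Suc i - Suc m = Suc (i - Suc m)" "i - Suc m < n" using i by auto
    then show ?thesis
      using 3 assms(2) unfolding join_partitions_def strict_partition_def by auto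
  qed (use assms in \<open>auto simp: join_partitions_def strict_partition_def\<close>)
next
  fix i assume "i \<le> m + Suc n"
  then show "join_partitions m q p i \<in> S"
    using assms unfolding join_partitions_def strict_partition_def by auto
qed

lemma strict_partition_mono: "strict_partition n t S \<Longrightarrow> S \<subseteq> T \<Longrightarrow> strict_partition n t T"
  unfolding strict_partition_def by blast

lemma strict_partition_reflect:
  assumes "strict_partition n t S"
  shows "strict_partition n (\<lambda>i. c - t (n - i)) ((\<lambda>s. c - s) ` S)"
  unfolding strict_partition_def
proof safe
  fix i assume "i < n"
  then have "t (n - Suc i) < t (Suc (n - Suc i))"
    using assms by (simp add: strict_partition_def)
  then show "c - t (n - i) < c - t (n - Suc i)"
    using \<open>i < n\<close> by (simp add: Suc_diff_Suc)
qed (use assms in \<open>auto simp: strict_partition_def\<close>)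

text \<open>Stack \<open>N\<close> such polygons at ever smaller scales.\<close>
lemma polygon_turning_stack:
  assumes turning: "\<And>\<epsilon>. 0 < \<epsilon> \<Longrightarrow> \<epsilon> \<le> e0 \<Longrightarrow>
      \<exists>n t. strict_partition n t {0<..\<epsilon>} \<and> \<eta> \<le> polygon_turning g n t"
    and "0 < \<epsilon>" "\<epsilon> \<le> e0"
  shows "\<exists>n t. strict_partition n t {0<..\<epsilon>} \<and> real N * \<eta> \<le> polygon_turning g n t"
  using assms(2,3)
proof (induction N arbitrary: \<epsilon>)
  case 0
  have "strict_partition 0 (\<lambda>_. \<epsilon>) {0<..\<epsilon>}" using 0 by (simp add: strict_partition_def)
  then show ?case using polygon_turning_nonneg[of g 0 "\<lambda>_. \<epsilon>"] by auto
next
  case (Suc N)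
  obtain n p where p: "strict_partition n p {0<..\<epsilon>}" "\<eta> \<le> polygon_turning g n p"
    using turning Suc.prems by blast
  then have p0: "0 < p 0" "p 0 \<le> \<epsilon>" by (auto simp: strict_partition_def)
  then obtain m q where q: "strict_partition m q {0<..p 0 / 2}" "real N * \<eta> \<le> polygon_turning g m q"
    using Suc.IH[of "p 0 / 2"] Suc.prems by auto
  have "q m \<le> p 0 / 2" using q(1) by (auto simp: strict_partition_def)
  then have "strict_partition (m + Suc n) (join_partitions m q p) {0<..\<epsilon>}"
    using p0 by (intro strict_partition_join strict_partition_mono[OF q(1)] p(1)) auto
  moreover have "real (Suc N) * \<eta> \<le> polygon_turning g (m + Suc n) (join_partitions m q p)"
    using polygon_turning_join[of g m q n p] p(2) q(2) by (simp add: algebra_simps)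
  ultimately show ?case by blast
qed

lemma polygon_turning_le_total_curvature:
  assumes "strict_partition n t {0..<L}" "2 \<le> n"
  shows "ereal (polygon_turning \<gamma> n t) \<le> total_curvature \<gamma> L cl"
proof (cases cl)
  case False
  have "(n, t) \<in> {(n, t). 0 \<le> t 0 \<and> t n \<le> L \<and> (\<forall>i<n. t i < t (Suc i))}"
    using assms(1) by (auto simp: strict_partition_def)
  then show ?thesis
    unfolding total_curvature_def polygon_turning_def using False
    by (auto intro: SUP_upper2)
next
  case True
  define f where "f i = vangle (\<gamma> (t i) - \<gamma> (t ((i + Suc n - 1) mod Suc n)))
                    (\<gamma> (t ((i + 1) mod Suc n)) - \<gamma> (t i))" for i
  have "polygon_turning \<gamma> n t = (\<Sum>i\<in>{1..<n}. f i)"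
    unfolding polygon_turning_def f_def
  proof (intro sum.cong refl)
    fix i assume "i \<in> {1..<n}"
    then have "(i + Suc n - 1) mod Suc n = i - 1" "(i + 1) mod Suc n = Suc i"
      by (auto simp: mod_if)
    then show "vangle (\<gamma> (t i) - \<gamma> (t (i - 1))) (\<gamma> (t (Suc i)) - \<gamma> (t i)) =
        vangle (\<gamma> (t i) - \<gamma> (t ((i + Suc n - 1) mod Suc n))) (\<gamma> (t ((i + 1) mod Suc n)) - \<gamma> (t i))"
      by simp
  qed
  also have "\<dots> \<le> (\<Sum>i<Suc n. f i)"
    by (rule sum_mono2) (auto simp: f_def vangle_nonneg)
  finally have "ereal (polygon_turning \<gamma> n t) \<le> ereal (\<Sum>i<Suc n. f i)" by simp
  also have "\<dots> \<le> total_curvature \<gamma> L cl"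
  proof -
    have mem: "(Suc n, t) \<in> {(n, t). 3 \<le> n \<and> 0 \<le> t 0 \<and> t (n - 1) < L \<and>
                    (\<forall>i. Suc i < n \<longrightarrow> t i < t (Suc i))}"
      using assms by (auto simp: strict_partition_def)
    then show ?thesis
      unfolding total_curvature_def using True
      by (simp only: if_True) (rule SUP_upper2[OF mem], simp add: f_def)
  qed
  finally show ?thesis .
qed

lemma bounded_polygon_turning:
  assumes "finite_total_curvature \<gamma> L cl"
  obtains K where "\<And>n t. strict_partition n t {0..<L} \<Longrightarrow> polygon_turning \<gamma> n t \<le> K"
proof
  fix n t assume t: "strict_partition n t {0..<L}"
  show "polygon_turning \<gamma> n t \<le> max 0 (real_of_ereal (total_curvature \<gamma> L cl))"
  proof (cases "2 \<le> n")
    case True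
    have "ereal (polygon_turning \<gamma> n t) \<le> total_curvature \<gamma> L cl"
      by (rule polygon_turning_le_total_curvature[OF t True])
    moreover have "total_curvature \<gamma> L cl < \<infinity>"
      using assms unfolding finite_total_curvature_def .
    ultimately show ?thesis by (cases "total_curvature \<gamma> L cl") auto
  next
    case False
    then show ?thesis by (simp add: polygon_turning_def)
  qed
qed

lemma curve_length_polygon:
  "curve_length \<gamma> a b = (SUP (n, t) \<in> {(n, t). is_partition n t a b}. ereal (polygon_length \<gamma> n t))"
  unfolding curve_length_def is_partition_def polygon_length_def by (simp add: case_prod_beta)

lemma polygon_length_le_curve_length:
  "is_partition n t a b \<Longrightarrow> ereal (polygon_length \<gamma> n t) \<le> curve_length \<gamma> a b"
  unfolding curve_length_polygon by (rule SUP_upper2[of "(n, t)"]) auto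

lemma dist_le_curve_length: "a \<le> b \<Longrightarrow> ereal (dist (\<gamma> a) (\<gamma> b)) \<le> curve_length \<gamma> a b"
  using polygon_length_le_curve_length[of 1 "\<lambda>i. if i = 0 then a else b" a b \<gamma>]
  by (simp add: is_partition_def polygon_length_def)

lemma curve_length_approx:
  assumes "curve_length \<gamma> a b = ereal l" "0 < \<delta>"
  obtains n t where "is_partition n t a b" "l - \<delta> < polygon_length \<gamma> n t"
proof -
  have "ereal (l - \<delta>) < curve_length \<gamma> a b" using assms by simp
  then show ?thesis
    using that unfolding curve_length_polygon less_SUP_iff by auto
qed

lemma is_partition_bounds:
  assumes "is_partition n t a b" "i \<le> n"
  shows "a \<le> t i" "t i \<le> b"
proof -
  have mono: "\<And>j. j \<in> {..<n} \<Longrightarrow> t j \<le> t (Suc j)" using assms(1) by (simp add: is_partition_def)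
  have "t 0 \<le> t i" by (rule lift_Suc_mono_le_ivl[of "{..<n}" t, OF mono]) (use assms(2) in auto)
  moreover have "t i \<le> t n" by (rule lift_Suc_mono_le_ivl[of "{..<n}" t, OF mono]) (use assms(2) in auto)
  ultimately show "a \<le> t i" "t i \<le> b" using assms(1) by (simp_all add: is_partition_def)
qed

lemma curve_length_shift_le:
  "curve_length (\<lambda>h. \<gamma> (c + h)) a b \<le> curve_length \<gamma> (c + a) (c + b)"
  unfolding curve_length_polygon[of "\<lambda>h. \<gamma> (c + h)"]
proof (rule SUP_least, clarify)
  fix n t assume "is_partition n t a b"
  then have "is_partition n (\<lambda>i. c + t i) (c + a) (c + b)" by (simp add: is_partition_def)
  then show "ereal (polygon_length (\<lambda>h. \<gamma> (c + h)) n t) \<le> curve_length \<gamma> (c + a) (c + b)"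
    using polygon_length_le_curve_length unfolding polygon_length_def by fastforce
qed

lemma curve_length_shift:
  "curve_length (\<lambda>h. \<gamma> (c + h)) a b = curve_length \<gamma> (c + a) (c + b)"
  using curve_length_shift_le[of \<gamma> c a b] curve_length_shift_le[of "\<lambda>h. \<gamma> (c + h)" "- c" "c + a" "c + b"]
  by simp

lemma polygon_length_reflect:
  "polygon_length (\<lambda>h. g (c - h)) n t = polygon_length g n (\<lambda>i. c - t (n - i))"
proof -
  have "polygon_length (\<lambda>h. g (c - h)) n t = (\<Sum>i<n. dist (g (c - t (n - Suc i))) (g (c - t (Suc (n - Suc i)))))"
    unfolding polygon_length_def by (rule sum.nat_diff_reindex[symmetric])
  also have "\<dots> = polygon_length g n (\<lambda>i. c - t (n - i))"
    unfolding polygon_length_def by (intro sum.cong refl) (auto simp: Suc_diff_Suc dist_commute)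
  finally show ?thesis .
qed

lemma curve_length_reflect_le:
  "curve_length (\<lambda>h. \<gamma> (c - h)) a b \<le> curve_length \<gamma> (c - b) (c - a)"
  unfolding curve_length_polygon[of "\<lambda>h. \<gamma> (c - h)"]
proof (rule SUP_least, clarify)
  fix n t assume t: "is_partition n t a b"
  have mono: "t j \<le> t (Suc j)" if "j < n" for j
    using t that by (simp add: is_partition_def)
  have "t (n - Suc i) \<le> t (n - i)" if "i < n" for i
    using mono[of "n - Suc i"] that by (simp add: Suc_diff_Suc)
  then have "is_partition n (\<lambda>i. c - t (n - i)) (c - b) (c - a)"
    using t by (simp add: is_partition_def)
  then show "ereal (polygon_length (\<lambda>h. \<gamma> (c - h)) n t) \<le> curve_length \<gamma> (c - b) (c - a)"
    unfolding polygon_length_reflect by (rule polygon_length_le_curve_length)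
qed

lemma curve_length_reflect:
  "curve_length (\<lambda>h. \<gamma> (c - h)) a b = curve_length \<gamma> (c - b) (c - a)"
  using curve_length_reflect_le[of \<gamma> c a b] curve_length_reflect_le[of "\<lambda>h. \<gamma> (c - h)" c "c - b" "c - a"]
  by simp

section \<open>Arcs of bounded turning\<close>

lemma chord_ge_if_directions_close:
  fixes g :: "real \<Rightarrow> 'a::euclidean_space"
  assumes "curve_length g a b = ereal (b - a)" "norm u = 1" "0 \<le> \<eta>" "\<eta> \<le> 1"
    and close: "\<And>x y. a \<le> x \<Longrightarrow> x < y \<Longrightarrow> y \<le> b \<Longrightarrow> norm (sgn (g y - g x) - u) \<le> \<eta>"
  shows "(1 - \<eta>) * (b - a) \<le> dist (g a) (g b)"
proof (rule field_le_epsilon)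
  fix \<delta> :: real assume "0 < \<delta>"
  then obtain n t where t: "is_partition n t a b" "b - a - \<delta> < polygon_length g n t"
    using curve_length_approx[OF assms(1)] by blast
  define v where "v i = g (t (Suc i)) - g (t i)" for i
  have "norm (sgn (v i) - u) \<le> \<eta>" if "i \<in> {..<n}" "v i \<noteq> 0" for i
  proof -
    have "t i \<le> t (Suc i)" using t(1) that(1) by (simp add: is_partition_def)
    moreover have "t i \<noteq> t (Suc i)" using that(2) unfolding v_def by auto
    ultimately show ?thesis
      unfolding v_def using that(1) is_partition_bounds[OF t(1)] by (intro close) auto
  qed
  then have "(1 - \<eta>) * (\<Sum>i<n. norm (v i)) \<le> norm (\<Sum>i<n. v i)"
    by (rule norm_sum_ge_if_sgn_close[OF assms(2)])
  also have "(\<Sum>i<n. v i) = g b - g a"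
    using sum_lessThan_telescope[of "\<lambda>i. g (t i)" n] t(1) unfolding v_def is_partition_def by simp
  also have "(\<Sum>i<n. norm (v i)) = polygon_length g n t"
    unfolding polygon_length_def v_def by (simp add: dist_norm norm_minus_commute)
  finally have "(1 - \<eta>) * polygon_length g n t \<le> dist (g a) (g b)"
    by (simp add: dist_norm norm_minus_commute)
  moreover have "(1 - \<eta>) * (b - a - \<delta>) \<le> (1 - \<eta>) * polygon_length g n t"
    using t(2) assms(4) by (intro mult_left_mono) auto
  moreover have "(1 - \<eta>) * \<delta> \<le> \<delta>" using \<open>0 < \<delta>\<close> assms(3) by simp
  ultimately show "(1 - \<eta>) * (b - a) \<le> dist (g a) (g b) + \<delta>"
    by (simp add: right_diff_distrib)
qed

lemma dist_from_0_ge_by_continuity: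
  fixes g :: "real \<Rightarrow> 'a::metric_space"
  assumes "(g \<longlongrightarrow> g 0) (at_right 0)" "0 < b"
    and "\<And>x. 0 < x \<Longrightarrow> x < b \<Longrightarrow> k * (b - x) \<le> dist (g x) (g b)"
  shows "k * b \<le> dist (g 0) (g b)"
proof -
  have "((\<lambda>x. dist (g x) (g b)) \<longlongrightarrow> dist (g 0) (g b)) (at_right 0)"
    using assms(1) by (rule tendsto_dist) simp
  moreover have "((\<lambda>x. k * (b - x)) \<longlongrightarrow> k * (b - 0)) (at_right 0)"
    by (intro tendsto_intros)
  moreover have "\<forall>\<^sub>F x in at_right 0. k * (b - x) \<le> dist (g x) (g b)"
    unfolding eventually_at_right_field using assms(2,3) by (intro exI[of _ b]) auto
  ultimately have "k * (b - 0) \<le> dist (g 0) (g b)"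
    by (rule tendsto_le[OF trivial_limit_at_right_real])
  then show ?thesis by simp
qed

lemma at_right_limit_if_cauchy:
  fixes f :: "real \<Rightarrow> 'a::complete_space"
  assumes "\<And>e. 0 < e \<Longrightarrow> \<exists>d>0. \<forall>x y. a < x \<longrightarrow> x < a + d \<longrightarrow> a < y \<longrightarrow> y < a + d \<longrightarrow> dist (f x) (f y) < e"
  obtains l where "(f \<longlongrightarrow> l) (at_right a)"
proof -
  have "cauchy_filter (filtermap f (at_right a))"
    unfolding cauchy_filter_metric_filtermap
  proof (intro allI impI)
    fix e :: real assume "0 < e"
    then obtain d where "0 < d" "\<forall>x y. a < x \<longrightarrow> x < a + d \<longrightarrow> a < y \<longrightarrow> y < a + d \<longrightarrow> dist (f x) (f y) < e"
      using assms by blast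
    moreover have "eventually (\<lambda>x. a < x \<and> x < a + d) (at_right a)"
      using \<open>0 < d\<close> by (auto simp: eventually_at_right_field intro!: exI[of _ "a + d"])
    ultimately show "\<exists>P. eventually P (at_right a) \<and> (\<forall>x y. P x \<and> P y \<longrightarrow> dist (f x) (f y) < e)"
      by blast
  qed
  then obtain l where "filtermap f (at_right a) \<le> nhds l"
    using cauchy_filter_complete_converges[OF _ complete_UNIV] by fastforce
  then show ?thesis using that unfolding filterlim_def by blast
qed

text \<open>One side \<open>h \<mapsto> \<gamma> (s0 \<plusminus> h)\<close> of a curve at a point.\<close>
locale arclength_branch =
  fixes g :: "real \<Rightarrow> 'a::euclidean_space" and e0 K :: real
  assumes e0_pos: "0 < e0"
    and inj: "inj_on g {0<..e0}"
    and arclength: "\<And>a b. 0 \<le> a \<Longrightarrow> a \<le> b \<Longrightarrow> b \<le> e0 \<Longrightarrow> curve_length g a b = ereal (b - a)"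
    and turning_bounded: "\<And>n t. strict_partition n t {0<..e0} \<Longrightarrow> polygon_turning g n t \<le> K"
begin

lemma dist_le_arclength: "0 \<le> a \<Longrightarrow> a \<le> b \<Longrightarrow> b \<le> e0 \<Longrightarrow> dist (g a) (g b) \<le> b - a"
  using dist_le_curve_length[of a b g] arclength[of a b] by simp

lemma tendsto_at_right_0: "(g \<longlongrightarrow> g 0) (at_right 0)"
proof (rule tendstoI)
  fix e :: real assume "0 < e"
  have "dist (g h) (g 0) < e" if "0 < h" "h < min e e0" for h
    using dist_le_arclength[of 0 h] that by (simp add: dist_commute)
  then show "\<forall>\<^sub>F h in at_right 0. dist (g h) (g 0) < e"
    using \<open>0 < e\<close> e0_pos unfolding eventually_at_right_field by (intro exI[of _ "min e e0"]) auto
qed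

lemma chord_nonzero: "0 < a \<Longrightarrow> a < b \<Longrightarrow> b \<le> e0 \<Longrightarrow> g b - g a \<noteq> 0"
  using inj unfolding inj_on_def by fastforce

lemma direction_change_le_turning:
  assumes "0 < a" "a < b" "b \<le> c" "c < d" "d \<le> e0"
  obtains n t where "strict_partition n t {a..d}"
    "norm (sgn (g b - g a) - sgn (g d - g c)) \<le> polygon_turning g n t"
proof (cases "b = c")
  case True
  define t where "t i = (if i = 0 then a else if i = 1 then b else d)" for i :: nat
  have "strict_partition 2 t {a..d}"
    using assms True by (auto simp: t_def strict_partition_def numeral_2_eq_2 less_Suc_eq le_Suc_eq)
  moreover have "norm (sgn (g b - g a) - sgn (g d - g c)) \<le> polygon_turning g 2 t"
    using norm_sgn_diff_le_vangle[of "g b - g a" "g d - g b"] chord_nonzero assms True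
    by (simp add: polygon_turning_def t_def numeral_2_eq_2)
  ultimately show ?thesis using that by blast
next
  case False
  define t where "t i = (if i = 0 then a else if i = 1 then b else if i = 2 then c else d)" for i :: nat
  have "strict_partition 3 t {a..d}"
    using assms False by (auto simp: t_def strict_partition_def numeral_3_eq_3 less_Suc_eq le_Suc_eq)
  moreover have "norm (sgn (g b - g a) - sgn (g d - g c)) \<le> polygon_turning g 3 t"
  proof -
    have "norm (sgn (g b - g a) - sgn (g d - g c)) \<le>
        norm (sgn (g b - g a) - sgn (g c - g b)) + norm (sgn (g c - g b) - sgn (g d - g c))"
      using norm_triangle_ineq[of "sgn (g b - g a) - sgn (g c - g b)" "sgn (g c - g b) - sgn (g d - g c)"]
      by simp
    also have "\<dots> \<le> vangle (g b - g a) (g c - g b) + vangle (g c - g b) (g d - g c)"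
      using assms False chord_nonzero by (intro add_mono norm_sgn_diff_le_vangle) auto
    also have "\<dots> = polygon_turning g 3 t"
      by (simp add: polygon_turning_def t_def numeral_3_eq_3 numeral_2_eq_2)
    finally show ?thesis .
  qed
  ultimately show ?thesis using that by blast
qed

text \<open>Otherwise polygons with turning \<open>\<eta>\<close> exist at every scale and could be stacked into one
  whose turning exceeds \<open>K\<close>.\<close>
lemma chord_directions_close:
  assumes "0 < \<eta>"
  obtains \<epsilon> where "0 < \<epsilon>" "\<epsilon> \<le> e0"
    "\<And>a b c d. 0 < a \<Longrightarrow> a < b \<Longrightarrow> b \<le> c \<Longrightarrow> c < d \<Longrightarrow> d \<le> \<epsilon> \<Longrightarrow>
       norm (sgn (g b - g a) - sgn (g d - g c)) \<le> \<eta>"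
proof -
  have "\<exists>\<epsilon>>0. \<epsilon> \<le> e0 \<and> (\<forall>a b c d. 0 < a \<longrightarrow> a < b \<longrightarrow> b \<le> c \<longrightarrow> c < d \<longrightarrow> d \<le> \<epsilon> \<longrightarrow>
      norm (sgn (g b - g a) - sgn (g d - g c)) \<le> \<eta>)"
  proof (rule ccontr)
    assume far: "\<not> ?thesis"
    have "\<exists>n t. strict_partition n t {0<..\<epsilon>} \<and> \<eta> \<le> polygon_turning g n t"
      if "0 < \<epsilon>" "\<epsilon> \<le> e0" for \<epsilon>
    proof -
      have "\<not> (\<forall>a b c d. 0 < a \<longrightarrow> a < b \<longrightarrow> b \<le> c \<longrightarrow> c < d \<longrightarrow> d \<le> \<epsilon> \<longrightarrow>
          norm (sgn (g b - g a) - sgn (g d - g c)) \<le> \<eta>)"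
        using far that by blast
      then obtain a b c d where abcd: "0 < a" "a < b" "b \<le> c" "c < d" "d \<le> \<epsilon>"
        "\<eta> < norm (sgn (g b - g a) - sgn (g d - g c))"
        by (auto simp: not_le)
      moreover have "d \<le> e0" using abcd(5) that(2) by linarith
      then obtain n t where nt: "strict_partition n t {a..d}"
        "norm (sgn (g b - g a) - sgn (g d - g c)) \<le> polygon_turning g n t"
        by (rule direction_change_le_turning[OF abcd(1-4)])
      moreover have "strict_partition n t {0<..\<epsilon>}"
        by (rule strict_partition_mono[OF nt(1)]) (use abcd in auto)
      ultimately show ?thesis by (meson less_le_trans less_imp_le)
    qed
    then have stack: "\<exists>n t. strict_partition n t {0<..e0} \<and> real N * \<eta> \<le> polygon_turning g n t" for N
      using e0_pos by (intro polygon_turning_stack) auto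
    obtain N where "K < real N * \<eta>"
      using ex_less_of_nat_mult[OF assms] by blast
    moreover obtain n t where "strict_partition n t {0<..e0}" "real N * \<eta> \<le> polygon_turning g n t"
      using stack by blast
    ultimately show False using turning_bounded[of n t] by linarith
  qed
  then show ?thesis using that by blast
qed

lemma chord_lower_bound:
  assumes "0 < \<eta>"
  obtains \<epsilon> where "0 < \<epsilon>" "\<epsilon> \<le> e0"
    "\<And>a b. 0 \<le> a \<Longrightarrow> a \<le> b \<Longrightarrow> b \<le> \<epsilon> \<Longrightarrow> (1 - \<eta>) * (b - a) \<le> dist (g a) (g b)"
proof (cases "\<eta> < 1")
  case True
  obtain \<epsilon>\<^sub>1 where \<epsilon>\<^sub>1: "0 < \<epsilon>\<^sub>1" "\<epsilon>\<^sub>1 \<le> e0"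
    and close: "\<And>a b c d. 0 < a \<Longrightarrow> a < b \<Longrightarrow> b \<le> c \<Longrightarrow> c < d \<Longrightarrow> d \<le> \<epsilon>\<^sub>1 \<Longrightarrow>
       norm (sgn (g b - g a) - sgn (g d - g c)) \<le> \<eta>"
    using chord_directions_close[OF assms] by blast
  have pos: "(1 - \<eta>) * (b - a) \<le> dist (g a) (g b)" if "0 < a" "a \<le> b" "b \<le> \<epsilon>\<^sub>1 / 2" for a b
  proof (rule chord_ge_if_directions_close)
    show "curve_length g a b = ereal (b - a)" using that \<epsilon>\<^sub>1 by (intro arclength) auto
    show "norm (sgn (g \<epsilon>\<^sub>1 - g b)) = 1" using chord_nonzero[of b \<epsilon>\<^sub>1] that \<epsilon>\<^sub>1 by (simp add: norm_sgn)
    show "norm (sgn (g y - g x) - sgn (g \<epsilon>\<^sub>1 - g b)) \<le> \<eta>" if "a \<le> x" "x < y" "y \<le> b" for x y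
      using that \<open>0 < a\<close> \<open>b \<le> \<epsilon>\<^sub>1 / 2\<close> \<epsilon>\<^sub>1 by (intro close) auto
  qed (use True assms in simp_all)
  have "(1 - \<eta>) * (b - a) \<le> dist (g a) (g b)" if "0 \<le> a" "a \<le> b" "b \<le> \<epsilon>\<^sub>1 / 2" for a b
  proof (cases "0 < a")
    case True
    then show ?thesis using that by (intro pos) auto
  next
    case False
    then have "a = 0" using that by simp
    show ?thesis
    proof (cases "b = 0")
      case False
      then have "(1 - \<eta>) * b \<le> dist (g 0) (g b)"
        using that \<open>a = 0\<close>
        by (intro dist_from_0_ge_by_continuity[OF tendsto_at_right_0]) (auto intro!: pos)
      then show ?thesis using \<open>a = 0\<close> by simp
    qed (use \<open>a = 0\<close> in simp)
  qed
  then show ?thesis using that[of "\<epsilon>\<^sub>1 / 2"] \<epsilon>\<^sub>1 by simp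
next
  case False
  have "(1 - \<eta>) * (b - a) \<le> dist (g a) (g b)" if "a \<le> b" for a b
  proof -
    have "(1 - \<eta>) * (b - a) \<le> 0" using False that by (simp add: mult_nonpos_nonneg)
    then show ?thesis using zero_le_dist[of "g a" "g b"] by linarith
  qed
  then show ?thesis using that e0_pos by blast
qed

lemma secant_length_ratio_tendsto: "((\<lambda>h. norm (g h - g 0) / h) \<longlongrightarrow> 1) (at_right 0)"
proof (rule tendstoI)
  fix e :: real assume "0 < e"
  obtain \<epsilon> where \<epsilon>: "0 < \<epsilon>" "\<epsilon> \<le> e0"
    and lower: "\<And>a b. 0 \<le> a \<Longrightarrow> a \<le> b \<Longrightarrow> b \<le> \<epsilon> \<Longrightarrow> (1 - e/2) * (b - a) \<le> dist (g a) (g b)"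
    using chord_lower_bound[of "e/2"] \<open>0 < e\<close> by auto
  have "dist (norm (g h - g 0) / h) 1 < e" if "0 < h" "h < \<epsilon>" for h
  proof -
    have "(1 - e/2) * h \<le> norm (g h - g 0)" "norm (g h - g 0) \<le> h"
      using lower[of 0 h] dist_le_arclength[of 0 h] that \<epsilon> by (simp_all add: dist_norm norm_minus_commute)
    then show ?thesis using that \<open>0 < e\<close> by (simp add: dist_real_def abs_if field_simps)
  qed
  then show "\<forall>\<^sub>F h in at_right 0. dist (norm (g h - g 0) / h) 1 < e"
    unfolding eventually_at_right_field using \<epsilon> by blast
qed

lemma eventually_secant_nonzero: "\<forall>\<^sub>F h in at_right 0. g h - g 0 \<noteq> 0"
proof -
  have "\<forall>\<^sub>F h in at_right 0. 1/2 < norm (g h - g 0) / h"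
    by (rule order_tendstoD(1)[OF secant_length_ratio_tendsto]) simp
  then show ?thesis by eventually_elim auto
qed

text \<open>The direction of \<open>g x - g 0\<close> is the limit of those of \<open>g x - g a\<close> as \<open>a \<rightarrow> 0\<^sup>+\<close>, which
  all lie near one fixed chord direction further out.\<close>
lemma secant_directions_cauchy:
  assumes "0 < \<eta>"
  obtains \<epsilon> where "0 < \<epsilon>"
    "\<And>x y. 0 < x \<Longrightarrow> x < \<epsilon> \<Longrightarrow> 0 < y \<Longrightarrow> y < \<epsilon> \<Longrightarrow> dist (sgn (g x - g 0)) (sgn (g y - g 0)) \<le> \<eta>"
proof -
  obtain \<epsilon>\<^sub>1 where \<epsilon>\<^sub>1: "0 < \<epsilon>\<^sub>1" "\<epsilon>\<^sub>1 \<le> e0"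
    and close: "\<And>a b c d. 0 < a \<Longrightarrow> a < b \<Longrightarrow> b \<le> c \<Longrightarrow> c < d \<Longrightarrow> d \<le> \<epsilon>\<^sub>1 \<Longrightarrow>
       norm (sgn (g b - g a) - sgn (g d - g c)) \<le> \<eta> / 2"
    using chord_directions_close[of "\<eta> / 2"] assms by auto
  obtain \<epsilon>\<^sub>2 where \<epsilon>\<^sub>2: "0 < \<epsilon>\<^sub>2" and nonzero: "\<And>h. 0 < h \<Longrightarrow> h < \<epsilon>\<^sub>2 \<Longrightarrow> g h - g 0 \<noteq> 0"
    using eventually_secant_nonzero unfolding eventually_at_right_field by auto
  define \<epsilon> where "\<epsilon> = min (\<epsilon>\<^sub>1 / 2) \<epsilon>\<^sub>2"
  define z where "z = sgn (g (2 * \<epsilon>) - g \<epsilon>)"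
  have near_z: "dist (sgn (g x - g 0)) z \<le> \<eta> / 2" if "0 < x" "x < \<epsilon>" for x
  proof (rule tendsto_upperbound[OF _ _ trivial_limit_at_right_real])
    show "((\<lambda>a. dist (sgn (g x - g a)) z) \<longlongrightarrow> dist (sgn (g x - g 0)) z) (at_right 0)"
      using nonzero[of x] that \<epsilon>\<^sub>2 by (intro tendsto_intros tendsto_at_right_0) (auto simp: \<epsilon>_def)
    have "dist (sgn (g x - g a)) z \<le> \<eta> / 2" if "0 < a" "a < x" for a
      unfolding z_def dist_norm using \<open>x < \<epsilon>\<close> that \<epsilon>\<^sub>1 by (intro close) (auto simp: \<epsilon>_def)
    then show "\<forall>\<^sub>F a in at_right 0. dist (sgn (g x - g a)) z \<le> \<eta> / 2"
      unfolding eventually_at_right_field using that by blast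
  qed
  have "dist (sgn (g x - g 0)) (sgn (g y - g 0)) \<le> \<eta>" if "0 < x" "x < \<epsilon>" "0 < y" "y < \<epsilon>" for x y
    using near_z[of x] near_z[of y] dist_triangle2[of "sgn (g x - g 0)" "sgn (g y - g 0)" z] that
    by linarith
  moreover have "0 < \<epsilon>" using \<epsilon>\<^sub>1 \<epsilon>\<^sub>2 by (simp add: \<epsilon>_def)
  ultimately show ?thesis using that by blast
qed

lemma unit_tangent:
  obtains T where "norm T = 1" "((\<lambda>h. (g h - g 0) /\<^sub>R h) \<longlongrightarrow> T) (at_right 0)"
proof -
  obtain T where T: "((\<lambda>h. sgn (g h - g 0)) \<longlongrightarrow> T) (at_right 0)"
  proof (rule at_right_limit_if_cauchy)
    fix e :: real assume "0 < e"
    then obtain \<epsilon> where "0 < \<epsilon>"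
      "\<And>x y. 0 < x \<Longrightarrow> x < \<epsilon> \<Longrightarrow> 0 < y \<Longrightarrow> y < \<epsilon> \<Longrightarrow> dist (sgn (g x - g 0)) (sgn (g y - g 0)) \<le> e / 2"
      using secant_directions_cauchy[of "e / 2"] by auto
    then show "\<exists>d>0. \<forall>x y. 0 < x \<longrightarrow> x < 0 + d \<longrightarrow> 0 < y \<longrightarrow> y < 0 + d \<longrightarrow>
        dist (sgn (g x - g 0)) (sgn (g y - g 0)) < e"
      using \<open>0 < e\<close> by (intro exI[of _ \<epsilon>]) force
  qed
  have "((\<lambda>h. norm (sgn (g h - g 0))) \<longlongrightarrow> 1) (at_right 0)"
    using eventually_secant_nonzero
    by (rule tendsto_eventually[OF eventually_mono]) (simp add: norm_sgn)
  then have "norm T = 1"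
    using tendsto_norm[OF T] by (rule tendsto_unique[OF trivial_limit_at_right_real, rotated])
  have "((\<lambda>h. (norm (g h - g 0) / h) *\<^sub>R sgn (g h - g 0)) \<longlongrightarrow> 1 *\<^sub>R T) (at_right 0)"
    by (intro tendsto_scaleR secant_length_ratio_tendsto T)
  moreover have "\<forall>\<^sub>F h in at_right 0. (norm (g h - g 0) / h) *\<^sub>R sgn (g h - g 0) = (g h - g 0) /\<^sub>R h"
    using eventually_secant_nonzero by eventually_elim (simp add: sgn_div_norm inverse_eq_divide)
  ultimately have "((\<lambda>h. (g h - g 0) /\<^sub>R h) \<longlongrightarrow> T) (at_right 0)"
    by (auto intro: Lim_transform_eventually)
  then show ?thesis using that \<open>norm T = 1\<close> by blast
qed

end

section \<open>Two branches meeting at a corner\<close>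

lemma difference_quotient_approx:
  assumes "((\<lambda>h. q h /\<^sub>R h) \<longlongrightarrow> T) (at_right 0)" "0 < \<eta>"
  obtains \<delta> where "0 < \<delta>" "\<And>h. 0 < h \<Longrightarrow> h < \<delta> \<Longrightarrow> norm (q h - h *\<^sub>R T) \<le> \<eta> * h"
proof -
  obtain \<delta> where "0 < \<delta>" and \<delta>: "\<And>h. 0 < h \<Longrightarrow> h < \<delta> \<Longrightarrow> dist (q h /\<^sub>R h) T < \<eta>"
    using tendstoD[OF assms] unfolding eventually_at_right_field by auto
  have "norm (q h - h *\<^sub>R T) \<le> \<eta> * h" if "0 < h" "h < \<delta>" for h
  proof -
    have "q h - h *\<^sub>R T = h *\<^sub>R (q h /\<^sub>R h - T)" using that by (simp add: algebra_simps)
    then have "norm (q h - h *\<^sub>R T) = h * dist (q h /\<^sub>R h) T" using that by (simp add: dist_norm)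
    then show ?thesis using \<delta>[OF that] that by (simp add: mult.commute)
  qed
  then show ?thesis using that \<open>0 < \<delta>\<close> by blast
qed

locale arclength_branch_pair =
  right: arclength_branch "\<lambda>h. \<gamma> (s0 + h)" e0 K +
  left: arclength_branch "\<lambda>h. \<gamma> (s0 - h)" e0 K
  for \<gamma> :: "real \<Rightarrow> 'a::euclidean_space" and s0 e0 K :: real
begin

lemma T_plus_tendsto: "((\<lambda>h. (\<gamma> (s0 + h) - \<gamma> s0) /\<^sub>R h) \<longlongrightarrow> T_plus \<gamma> s0) (at_right 0)"
  and norm_T_plus: "norm (T_plus \<gamma> s0) = 1"
proof -
  obtain T where "norm T = 1" "((\<lambda>h. (\<gamma> (s0 + h) - \<gamma> s0) /\<^sub>R h) \<longlongrightarrow> T) (at_right 0)"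
    using right.unit_tangent by auto
  moreover from this(2) have "T_plus \<gamma> s0 = T"
    unfolding T_plus_def by (rule tendsto_Lim[OF trivial_limit_at_right_real])
  ultimately show "((\<lambda>h. (\<gamma> (s0 + h) - \<gamma> s0) /\<^sub>R h) \<longlongrightarrow> T_plus \<gamma> s0) (at_right 0)"
    "norm (T_plus \<gamma> s0) = 1" by simp_all
qed

lemma T_minus_tendsto: "((\<lambda>h. (\<gamma> s0 - \<gamma> (s0 - h)) /\<^sub>R h) \<longlongrightarrow> T_minus \<gamma> s0) (at_right 0)"
  and norm_T_minus: "norm (T_minus \<gamma> s0) = 1"
proof -
  obtain T where "norm T = 1" "((\<lambda>h. (\<gamma> (s0 - h) - \<gamma> s0) /\<^sub>R h) \<longlongrightarrow> T) (at_right 0)"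
    using left.unit_tangent by auto
  moreover from tendsto_minus[OF this(2)]
  have "((\<lambda>h. (\<gamma> s0 - \<gamma> (s0 - h)) /\<^sub>R h) \<longlongrightarrow> - T) (at_right 0)"
    by (simp add: scaleR_minus_right[symmetric] del: scaleR_minus_right)
  moreover from this have "T_minus \<gamma> s0 = - T"
    unfolding T_minus_def by (rule tendsto_Lim[OF trivial_limit_at_right_real])
  ultimately show "((\<lambda>h. (\<gamma> s0 - \<gamma> (s0 - h)) /\<^sub>R h) \<longlongrightarrow> T_minus \<gamma> s0) (at_right 0)"
    "norm (T_minus \<gamma> s0) = 1" by simp_all
qed

lemma symmetric_chord_ratio_tendsto:
  "((\<lambda>h. norm (\<gamma> (s0 + h) - \<gamma> (s0 - h)) / (2 * h)) \<longlongrightarrow> cos (turn_angle \<gamma> s0 / 2)) (at_right 0)"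
proof -
  have "((\<lambda>h. (\<gamma> s0 - \<gamma> (s0 - h)) /\<^sub>R h + (\<gamma> (s0 + h) - \<gamma> s0) /\<^sub>R h)
      \<longlongrightarrow> T_minus \<gamma> s0 + T_plus \<gamma> s0) (at_right 0)"
    by (rule tendsto_add[OF T_minus_tendsto T_plus_tendsto])
  then have "((\<lambda>h. norm ((\<gamma> s0 - \<gamma> (s0 - h)) /\<^sub>R h + (\<gamma> (s0 + h) - \<gamma> s0) /\<^sub>R h) / 2)
      \<longlongrightarrow> norm (T_minus \<gamma> s0 + T_plus \<gamma> s0) / 2) (at_right 0)"
    by (rule tendsto_divide[OF tendsto_norm tendsto_const]) simp_all
  also have "norm (T_minus \<gamma> s0 + T_plus \<gamma> s0) / 2 = cos (turn_angle \<gamma> s0 / 2)"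
    unfolding turn_angle_def by (simp add: norm_add_unit_vectors norm_T_plus norm_T_minus)
  finally show ?thesis
  proof (rule Lim_transform_eventually)
    have eq: "norm ((\<gamma> s0 - \<gamma> (s0 - h)) /\<^sub>R h + (\<gamma> (s0 + h) - \<gamma> s0) /\<^sub>R h) / 2 =
        norm (\<gamma> (s0 + h) - \<gamma> (s0 - h)) / (2 * h)" if "0 < h" for h
    proof -
      have "(\<gamma> s0 - \<gamma> (s0 - h)) /\<^sub>R h + (\<gamma> (s0 + h) - \<gamma> s0) /\<^sub>R h =
          inverse h *\<^sub>R ((\<gamma> s0 - \<gamma> (s0 - h)) + (\<gamma> (s0 + h) - \<gamma> s0))"
        by (rule scaleR_add_right[symmetric])
      then show ?thesis using that by (simp add: inverse_eq_divide)
    qed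
    then show "\<forall>\<^sub>F h in at_right 0. norm ((\<gamma> s0 - \<gamma> (s0 - h)) /\<^sub>R h + (\<gamma> (s0 + h) - \<gamma> s0) /\<^sub>R h) / 2 =
        norm (\<gamma> (s0 + h) - \<gamma> (s0 - h)) / (2 * h)"
      unfolding eventually_at_right_field using eq by (intro exI[of _ 1]) auto
  qed
qed

lemma tendsto_branches:
  "((\<lambda>h. \<gamma> (s0 + h)) \<longlongrightarrow> \<gamma> s0) (at_right 0)" "((\<lambda>h. \<gamma> (s0 - h)) \<longlongrightarrow> \<gamma> s0) (at_right 0)"
  using right.tendsto_at_right_0 left.tendsto_at_right_0 by simp_all

text \<open>A chord across the corner is close to \<open>h\<^sub>1 T\<^sub>- + h\<^sub>2 T\<^sub>+\<close>.\<close>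
lemma chord_across_corner:
  assumes "0 < \<eta>"
  obtains \<delta> where "0 < \<delta>"
    "\<And>h\<^sub>1 h\<^sub>2. 0 < h\<^sub>1 \<Longrightarrow> h\<^sub>1 < \<delta> \<Longrightarrow> 0 < h\<^sub>2 \<Longrightarrow> h\<^sub>2 < \<delta> \<Longrightarrow>
       (cos (turn_angle \<gamma> s0 / 2) - \<eta>) * (h\<^sub>1 + h\<^sub>2) \<le> dist (\<gamma> (s0 - h\<^sub>1)) (\<gamma> (s0 + h\<^sub>2))"
proof -
  obtain \<delta>\<^sub>R where "0 < \<delta>\<^sub>R" and approx\<^sub>R: "\<And>h. 0 < h \<Longrightarrow> h < \<delta>\<^sub>R \<Longrightarrow>
      norm ((\<gamma> (s0 + h) - \<gamma> s0) - h *\<^sub>R T_plus \<gamma> s0) \<le> \<eta> * h"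
    using difference_quotient_approx[OF T_plus_tendsto assms] by blast
  obtain \<delta>\<^sub>L where "0 < \<delta>\<^sub>L" and approx\<^sub>L: "\<And>h. 0 < h \<Longrightarrow> h < \<delta>\<^sub>L \<Longrightarrow>
      norm ((\<gamma> s0 - \<gamma> (s0 - h)) - h *\<^sub>R T_minus \<gamma> s0) \<le> \<eta> * h"
    using difference_quotient_approx[OF T_minus_tendsto assms] by blast
  have "(cos (turn_angle \<gamma> s0 / 2) - \<eta>) * (h\<^sub>1 + h\<^sub>2) \<le> dist (\<gamma> (s0 - h\<^sub>1)) (\<gamma> (s0 + h\<^sub>2))"
    if h: "0 < h\<^sub>1" "h\<^sub>1 < min \<delta>\<^sub>R \<delta>\<^sub>L" "0 < h\<^sub>2" "h\<^sub>2 < min \<delta>\<^sub>R \<delta>\<^sub>L" for h\<^sub>1 h\<^sub>2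
  proof -
    define E\<^sub>L E\<^sub>R where "E\<^sub>L = (\<gamma> s0 - \<gamma> (s0 - h\<^sub>1)) - h\<^sub>1 *\<^sub>R T_minus \<gamma> s0"
      and "E\<^sub>R = (\<gamma> (s0 + h\<^sub>2) - \<gamma> s0) - h\<^sub>2 *\<^sub>R T_plus \<gamma> s0"
    have "cos (turn_angle \<gamma> s0 / 2) * (h\<^sub>1 + h\<^sub>2) \<le> norm (h\<^sub>1 *\<^sub>R T_minus \<gamma> s0 + h\<^sub>2 *\<^sub>R T_plus \<gamma> s0)"
      unfolding turn_angle_def using h
      by (intro cos_half_vangle_mult_le_norm norm_T_minus norm_T_plus) auto
    also have "h\<^sub>1 *\<^sub>R T_minus \<gamma> s0 + h\<^sub>2 *\<^sub>R T_plus \<gamma> s0 = (\<gamma> (s0 + h\<^sub>2) - \<gamma> (s0 - h\<^sub>1)) - (E\<^sub>L + E\<^sub>R)"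
      unfolding E\<^sub>L_def E\<^sub>R_def by (simp add: algebra_simps)
    also have "norm \<dots> \<le> dist (\<gamma> (s0 - h\<^sub>1)) (\<gamma> (s0 + h\<^sub>2)) + (norm E\<^sub>L + norm E\<^sub>R)"
      using norm_triangle_ineq4[of "\<gamma> (s0 + h\<^sub>2) - \<gamma> (s0 - h\<^sub>1)" "E\<^sub>L + E\<^sub>R"] norm_triangle_ineq[of E\<^sub>L E\<^sub>R]
      by (simp add: dist_norm norm_minus_commute)
    also have "norm E\<^sub>L + norm E\<^sub>R \<le> \<eta> * (h\<^sub>1 + h\<^sub>2)"
      using approx\<^sub>L[of h\<^sub>1] approx\<^sub>R[of h\<^sub>2] h unfolding E\<^sub>L_def E\<^sub>R_def by (simp add: distrib_left)
    finally show ?thesis by (simp add: algebra_simps)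
  qed
  then show ?thesis using that[of "min \<delta>\<^sub>R \<delta>\<^sub>L"] \<open>0 < \<delta>\<^sub>R\<close> \<open>0 < \<delta>\<^sub>L\<close> by simp
qed

text \<open>Chords within one branch are almost as long as the arc, and \<open>cos (\<alpha>/2) \<le> 1\<close>.\<close>
lemma chord_lower_bound:
  assumes "0 < \<eta>"
  obtains \<epsilon> where "0 < \<epsilon>" "\<epsilon> \<le> e0"
    "\<And>a b. \<bar>a\<bar> < \<epsilon> \<Longrightarrow> \<bar>b\<bar> < \<epsilon> \<Longrightarrow>
       (cos (turn_angle \<gamma> s0 / 2) - \<eta>) * \<bar>b - a\<bar> \<le> dist (\<gamma> (s0 + a)) (\<gamma> (s0 + b))"
proof -
  define c where "c = cos (turn_angle \<gamma> s0 / 2)"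
  obtain \<epsilon>\<^sub>R where \<epsilon>\<^sub>R: "0 < \<epsilon>\<^sub>R" "\<epsilon>\<^sub>R \<le> e0" and R: "\<And>a b. 0 \<le> a \<Longrightarrow> a \<le> b \<Longrightarrow> b \<le> \<epsilon>\<^sub>R \<Longrightarrow>
      (1 - \<eta>) * (b - a) \<le> dist (\<gamma> (s0 + a)) (\<gamma> (s0 + b))"
    using right.chord_lower_bound[OF assms] by blast
  obtain \<epsilon>\<^sub>L where \<epsilon>\<^sub>L: "0 < \<epsilon>\<^sub>L" "\<epsilon>\<^sub>L \<le> e0" and L: "\<And>a b. 0 \<le> a \<Longrightarrow> a \<le> b \<Longrightarrow> b \<le> \<epsilon>\<^sub>L \<Longrightarrow>
      (1 - \<eta>) * (b - a) \<le> dist (\<gamma> (s0 - a)) (\<gamma> (s0 - b))"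
    using left.chord_lower_bound[OF assms] by blast
  obtain \<delta> where "0 < \<delta>" and corner: "\<And>h\<^sub>1 h\<^sub>2. 0 < h\<^sub>1 \<Longrightarrow> h\<^sub>1 < \<delta> \<Longrightarrow> 0 < h\<^sub>2 \<Longrightarrow> h\<^sub>2 < \<delta> \<Longrightarrow>
      (c - \<eta>) * (h\<^sub>1 + h\<^sub>2) \<le> dist (\<gamma> (s0 - h\<^sub>1)) (\<gamma> (s0 + h\<^sub>2))"
    using chord_across_corner[OF assms] unfolding c_def by blast
  define \<epsilon> where "\<epsilon> = min (min \<epsilon>\<^sub>R \<epsilon>\<^sub>L) \<delta>"
  have "c \<le> 1" unfolding c_def by simp
  have ordered: "(c - \<eta>) * (b - a) \<le> dist (\<gamma> (s0 + a)) (\<gamma> (s0 + b))"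
    if "\<bar>a\<bar> < \<epsilon>" "\<bar>b\<bar> < \<epsilon>" "a \<le> b" for a b
  proof -
    have weaker: "(c - \<eta>) * (b - a) \<le> (1 - \<eta>) * (b - a)"
      using \<open>c \<le> 1\<close> that by (intro mult_right_mono) auto
    consider "0 \<le> a" | "b \<le> 0" | "a < 0" "0 < b" by linarith
    then show ?thesis
    proof cases
      case 1
      then show ?thesis using R[of a b] weaker that by (simp add: \<epsilon>_def)
    next
      case 2
      then show ?thesis using L[of "- b" "- a"] weaker that by (simp add: \<epsilon>_def dist_commute)
    next
      case 3
      then show ?thesis using corner[of "- a" b] that by (simp add: \<epsilon>_def)
    qed
  qed
  have "(c - \<eta>) * \<bar>b - a\<bar> \<le> dist (\<gamma> (s0 + a)) (\<gamma> (s0 + b))" if "\<bar>a\<bar> < \<epsilon>" "\<bar>b\<bar> < \<epsilon>" for a b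
    using ordered[of a b] ordered[of b a] that by (cases "a \<le> b") (auto simp: dist_commute)
  moreover have "0 < \<epsilon>" "\<epsilon> \<le> e0"
    using \<epsilon>\<^sub>R \<epsilon>\<^sub>L \<open>0 < \<delta>\<close> unfolding \<epsilon>_def by auto
  ultimately show ?thesis using that unfolding c_def by blast
qed

end

section \<open>Distortion near a point of the curve\<close>

lemma tendsto_inverse_esec:
  fixes f :: "'b \<Rightarrow> real"
  assumes "(f \<longlongrightarrow> cos \<theta>) F" "\<forall>\<^sub>F x in F. 0 < f x"
  shows "((\<lambda>x. ereal (1 / f x)) \<longlongrightarrow> esec \<theta>) F"
proof (cases "cos \<theta> = 0")
  case True
  then have "filterlim f (at_right 0) F"
    using assms by (intro tendsto_imp_filterlim_at_right) simp_all
  then have "filterlim (\<lambda>x. inverse (f x)) at_top F"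
    by (rule filterlim_compose[OF filterlim_inverse_at_top_right])
  then show ?thesis
    unfolding esec_def True by (simp add: tendsto_PInfty_eq_at_top inverse_eq_divide)
next
  case False
  then have "((\<lambda>x. 1 / f x) \<longlongrightarrow> 1 / cos \<theta>) F"
    using assms(1) by (intro tendsto_intros)
  then show ?thesis
    unfolding esec_def using False by (simp add: tendsto_ereal)
qed

lemma le_Limsup_if_tendsto_along:
  fixes f :: "'a \<Rightarrow> 'b::{complete_linorder,linorder_topology}"
  assumes "filterlim \<phi> G F" "F \<noteq> bot" "((\<lambda>x. f (\<phi> x)) \<longlongrightarrow> l) F"
  shows "l \<le> Limsup G f"
proof -
  have "l = Limsup F (\<lambda>x. f (\<phi> x))"
    using assms(2,3) by (simp add: lim_imp_Limsup)
  also have "\<dots> \<le> Limsup G f"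
    unfolding Limsup_le_iff
  proof (intro allI impI)
    fix y assume "Limsup G f < y"
    then have "\<forall>\<^sub>F p in G. f p < y" by (rule Limsup_lessD)
    then show "\<forall>\<^sub>F x in F. f (\<phi> x) < y"
      using assms(1) unfolding filterlim_iff by blast
  qed
  finally show ?thesis .
qed

lemma arclength_branch_shift:
  assumes inj: "inj_on \<gamma> {0..<L}" and arclength: "arclength_param \<gamma> L"
    and turning: "\<And>n t. strict_partition n t {0..<L} \<Longrightarrow> polygon_turning \<gamma> n t \<le> K"
    and c: "0 \<le> c" "c + e0 < L" "0 < e0"
  shows "arclength_branch (\<lambda>h. \<gamma> (c + h)) e0 K"
proof
  show "0 < e0" by fact
  show "inj_on (\<lambda>h. \<gamma> (c + h)) {0<..e0}"
  proof (rule inj_onI)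
    fix x y assume "x \<in> {0<..e0}" "y \<in> {0<..e0}" "\<gamma> (c + x) = \<gamma> (c + y)"
    then have "c + x = c + y" by (rule_tac inj_onD[OF inj]) (use c in auto)
    then show "x = y" by simp
  qed
  fix a b assume "0 \<le> a" "a \<le> b" "b \<le> e0"
  then show "curve_length (\<lambda>h. \<gamma> (c + h)) a b = ereal (b - a)"
    using arclength c unfolding curve_length_shift arclength_param_def by simp
next
  fix n t assume "strict_partition n t {0<..e0}"
  then have "strict_partition n (\<lambda>i. c + t i) {0..<L}"
    using c unfolding strict_partition_def by force
  then show "polygon_turning (\<lambda>h. \<gamma> (c + h)) n t \<le> K"
    unfolding polygon_turning_shift by (rule turning)
qed

lemma arclength_branch_reflect:
  assumes inj: "inj_on \<gamma> {0..<L}" and arclength: "arclength_param \<gamma> L"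
    and turning: "\<And>n t. strict_partition n t {0..<L} \<Longrightarrow> polygon_turning \<gamma> n t \<le> K"
    and c: "e0 \<le> c" "c \<le> L" "0 < e0"
  shows "arclength_branch (\<lambda>h. \<gamma> (c - h)) e0 K"
proof
  show "0 < e0" by fact
  show "inj_on (\<lambda>h. \<gamma> (c - h)) {0<..e0}"
  proof (rule inj_onI)
    fix x y assume "x \<in> {0<..e0}" "y \<in> {0<..e0}" "\<gamma> (c - x) = \<gamma> (c - y)"
    then have "c - x = c - y" by (rule_tac inj_onD[OF inj]) (use c in auto)
    then show "x = y" by simp
  qed
  fix a b assume "0 \<le> a" "a \<le> b" "b \<le> e0"
  then show "curve_length (\<lambda>h. \<gamma> (c - h)) a b = ereal (b - a)"
    using arclength c unfolding curve_length_reflect arclength_param_def by simp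
next
  fix n t assume "strict_partition n t {0<..e0}"
  then have "strict_partition n (\<lambda>i. c - t (n - i)) ((\<lambda>s. c - s) ` {0<..e0})"
    by (rule strict_partition_reflect)
  then have "strict_partition n (\<lambda>i. c - t (n - i)) {0..<L}"
    by (rule strict_partition_mono) (use c in auto)
  then show "polygon_turning (\<lambda>h. \<gamma> (c - h)) n t \<le> K"
    unfolding polygon_turning_reflect by (rule turning)
qed

definition distinct_pairs :: "'a set \<Rightarrow> ('a \<times> 'a) set" where
  "distinct_pairs S = {(p, q). p \<in> S \<and> q \<in> S \<and> p \<noteq> q}"

text \<open>\<open>e0 < L / 4\<close> makes \<open>Len\<close> between points near \<open>\<gamma> s0\<close> the plain parameter distance.\<close>
locale curve_point = arclength_branch_pair \<gamma> s0 e0 K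
  for \<gamma> :: "real \<Rightarrow> 'a::euclidean_space" and s0 e0 K :: real +
  fixes L :: real and cl :: bool
  assumes simple: "simple_curve \<gamma> L cl"
    and e0_small: "e0 < L / 4"
    and s0_range: "0 \<le> s0" "s0 + e0 < L" "\<not> cl \<Longrightarrow> e0 < s0"
begin

lemma inj_pdom: "inj_on \<gamma> (pdom L cl)"
  using simple unfolding simple_curve_def pdom_def by (cases cl) auto

lemma periodic: "cl \<Longrightarrow> \<gamma> (s + L) = \<gamma> s"
  using simple unfolding simple_curve_def by auto

lemma continuous_on_period: "continuous_on {0..L} \<gamma>"
  using simple unfolding simple_curve_def by (cases cl) (auto intro: continuous_on_subset)

lemma param_of_eq: "s \<in> pdom L cl \<Longrightarrow> param_of \<gamma> L cl (\<gamma> s) = s"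
  unfolding param_of_def using inj_pdom by (auto dest: inj_onD)

lemma local_param:
  assumes "\<bar>a\<bar> < e0"
  obtains s where "s \<in> pdom L cl" "\<gamma> s = \<gamma> (s0 + a)" "s = s0 + a \<or> cl \<and> s = s0 + a + L"
proof (cases "cl \<and> s0 + a < 0")
  case True
  then have "s0 + a + L \<in> pdom L cl" "\<gamma> (s0 + a + L) = \<gamma> (s0 + a)"
    using assms s0_range e0_small periodic unfolding pdom_def by auto
  then show ?thesis using that True by blast
next
  case False
  then have "s0 + a \<in> pdom L cl"
    using assms s0_range e0_small unfolding pdom_def by (cases cl) auto
  then show ?thesis using that by blast
qed

lemma Len_local:
  assumes "\<bar>a\<bar> < e0" "\<bar>b\<bar> < e0"
  shows "Len \<gamma> L cl (\<gamma> (s0 + a)) (\<gamma> (s0 + b)) = \<bar>a - b\<bar>"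
proof -
  obtain s\<^sub>a where a: "s\<^sub>a \<in> pdom L cl" "\<gamma> s\<^sub>a = \<gamma> (s0 + a)" "s\<^sub>a = s0 + a \<or> cl \<and> s\<^sub>a = s0 + a + L"
    using local_param[OF assms(1)] .
  obtain s\<^sub>b where b: "s\<^sub>b \<in> pdom L cl" "\<gamma> s\<^sub>b = \<gamma> (s0 + b)" "s\<^sub>b = s0 + b \<or> cl \<and> s\<^sub>b = s0 + b + L"
    using local_param[OF assms(2)] .
  have params: "param_of \<gamma> L cl (\<gamma> (s0 + a)) = s\<^sub>a" "param_of \<gamma> L cl (\<gamma> (s0 + b)) = s\<^sub>b"
    using param_of_eq[OF a(1)] param_of_eq[OF b(1)] a(2) b(2) by simp_all
  show ?thesis
  proof (cases cl)
    case True
    have "s\<^sub>a \<in> {0..<L}" "s\<^sub>b \<in> {0..<L}" using a(1) b(1) True by (simp_all add: pdom_def)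
    then have "min \<bar>s\<^sub>a - s\<^sub>b\<bar> (L - \<bar>s\<^sub>a - s\<^sub>b\<bar>) = \<bar>a - b\<bar>"
      using a(3) b(3) assms e0_small by (auto simp: min_def abs_if split: if_splits)
    then show ?thesis unfolding Len_def Let_def params using True by simp
  next
    case False
    then show ?thesis unfolding Len_def Let_def params using a(3) b(3) by auto
  qed
qed

lemma local_inj: "\<bar>a\<bar> < e0 \<Longrightarrow> \<bar>b\<bar> < e0 \<Longrightarrow> \<gamma> (s0 + a) = \<gamma> (s0 + b) \<Longrightarrow> a = b"
  using Len_local[of a b] Len_local[of a a] by simp

lemma point_param_cases:
  assumes "s \<in> {0..L}" "\<gamma> s = \<gamma> s0"
  shows "s = s0 \<or> cl \<and> s0 = 0 \<and> s = L"
proof -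
  have s0: "s0 \<in> pdom L cl" using s0_range right.e0_pos unfolding pdom_def by auto
  show ?thesis
  proof (cases "s \<in> pdom L cl")
    case True
    then show ?thesis using inj_onD[OF inj_pdom assms(2) _ s0] by simp
  next
    case False
    then have "cl" "s = L" using assms(1) unfolding pdom_def by (auto split: if_splits)
    then have "\<gamma> 0 = \<gamma> s0" using periodic[of 0] assms(2) by simp
    moreover have "0 \<in> pdom L cl" using s0 unfolding pdom_def by auto
    ultimately have "0 = s0" using inj_onD[OF inj_pdom _ _ s0] by blast
    then show ?thesis using \<open>cl\<close> \<open>s = L\<close> by simp
  qed
qed

text \<open>The parameters far from \<open>s0\<close> (modulo \<open>L\<close>) form a compact set whose image avoids \<open>\<gamma> s0\<close>.\<close>
lemma near_points_local:
  assumes "0 < \<epsilon>"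
  obtains \<rho> where "0 < \<rho>"
    "\<And>s. s \<in> pdom L cl \<Longrightarrow> dist (\<gamma> s) (\<gamma> s0) < \<rho> \<Longrightarrow> \<exists>a. \<bar>a\<bar> < \<epsilon> \<and> \<gamma> (s0 + a) = \<gamma> s"
proof -
  define shifts where "shifts = (if cl then {- L, 0, L} else {0})"
  define S where "S = {0..L} \<inter> (\<Inter>k\<in>shifts. {s. \<epsilon> \<le> \<bar>s - (s0 + k)\<bar>})"
  have "compact S"
    unfolding S_def by (auto intro!: compact_Int_closed closed_INT closed_Collect_le continuous_intros)
  moreover have "S \<subseteq> {0..L}" unfolding S_def by auto
  ultimately have "closed (\<gamma> ` S)"
    by (intro compact_imp_closed compact_continuous_image continuous_on_subset[OF continuous_on_period])
  moreover have "\<gamma> s0 \<notin> \<gamma> ` S"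
  proof
    assume "\<gamma> s0 \<in> \<gamma> ` S"
    then obtain s where s: "s \<in> S" "\<gamma> s = \<gamma> s0" by auto
    then have far: "\<And>k. k \<in> shifts \<Longrightarrow> \<epsilon> \<le> \<bar>s - (s0 + k)\<bar>" unfolding S_def by auto
    have "s = s0 \<or> cl \<and> s0 = 0 \<and> s = L"
      using s point_param_cases unfolding S_def by blast
    then show False
      using far[of 0] far[of L] \<open>0 < \<epsilon>\<close> unfolding shifts_def by (cases cl) auto
  qed
  ultimately obtain \<rho> where "0 < \<rho>" and \<rho>: "\<forall>x\<in>\<gamma> ` S. \<rho> \<le> dist (\<gamma> s0) x"
    using separate_point_closed by blast
  have "\<exists>a. \<bar>a\<bar> < \<epsilon> \<and> \<gamma> (s0 + a) = \<gamma> s" if "s \<in> pdom L cl" "dist (\<gamma> s) (\<gamma> s0) < \<rho>" for s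
  proof -
    have "s \<notin> S" using \<rho> that(2) by (auto simp: dist_commute)
    moreover have "s \<in> {0..L}" using that(1) unfolding pdom_def by (auto split: if_splits)
    ultimately have "\<exists>k\<in>shifts. \<bar>s - (s0 + k)\<bar> < \<epsilon>"
      unfolding S_def by (auto simp: not_le)
    then obtain k where k: "k \<in> shifts" "\<bar>s - (s0 + k)\<bar> < \<epsilon>" ..
    have "\<gamma> (s0 + (s - s0 - k)) = \<gamma> s"
      using k(1) periodic[of "s - L"] periodic[of s] unfolding shifts_def by (auto split: if_splits)
    then show ?thesis using k(2) by (intro exI[of _ "s - s0 - k"]) simp
  qed
  then show ?thesis using that \<open>0 < \<rho>\<close> by blast
qed

lemma symmetric_distortion_tendsto:
  "((\<lambda>h. ereal (distortion \<gamma> L cl (\<gamma> (s0 - h)) (\<gamma> (s0 + h)))) \<longlongrightarrow> esec (turn_angle \<gamma> s0 / 2))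
     (at_right 0)"
proof -
  define ratio where "ratio h = norm (\<gamma> (s0 + h) - \<gamma> (s0 - h)) / (2 * h)" for h
  have "0 < ratio h \<and> distortion \<gamma> L cl (\<gamma> (s0 - h)) (\<gamma> (s0 + h)) = 1 / ratio h"
    if "0 < h" "h < e0" for h
  proof -
    have "\<gamma> (s0 + - h) \<noteq> \<gamma> (s0 + h)" using local_inj[of "- h" h] that by auto
    moreover have "Len \<gamma> L cl (\<gamma> (s0 + - h)) (\<gamma> (s0 + h)) = 2 * h"
      using Len_local[of "- h" h] that by simp
    ultimately show ?thesis
      using that unfolding ratio_def distortion_def by (simp add: dist_norm norm_minus_commute)
  qed
  then have ev: "\<forall>\<^sub>F h in at_right 0. 0 < ratio h \<and> distortion \<gamma> L cl (\<gamma> (s0 - h)) (\<gamma> (s0 + h)) = 1 / ratio h"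
    unfolding eventually_at_right_field using right.e0_pos by blast
  have "((\<lambda>h. ereal (1 / ratio h)) \<longlongrightarrow> esec (turn_angle \<gamma> s0 / 2)) (at_right 0)"
  proof (rule tendsto_inverse_esec)
    show "(ratio \<longlongrightarrow> cos (turn_angle \<gamma> s0 / 2)) (at_right 0)"
      unfolding ratio_def[abs_def] by (rule symmetric_chord_ratio_tendsto)
    show "\<forall>\<^sub>F h in at_right 0. 0 < ratio h" using ev by (rule eventually_mono) simp
  qed
  moreover have "\<forall>\<^sub>F h in at_right 0. ereal (1 / ratio h) = ereal (distortion \<gamma> L cl (\<gamma> (s0 - h)) (\<gamma> (s0 + h)))"
    using ev by (rule eventually_mono) simp
  ultimately show ?thesis by (rule Lim_transform_eventually)
qed

lemma symmetric_pairs_filterlim: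
  "filterlim (\<lambda>h. (\<gamma> (s0 - h), \<gamma> (s0 + h))) (at (\<gamma> s0, \<gamma> s0) within distinct_pairs (\<gamma> ` pdom L cl))
     (at_right 0)"
  unfolding filterlim_at
proof
  have "(\<gamma> (s0 - h), \<gamma> (s0 + h)) \<in> distinct_pairs (\<gamma> ` pdom L cl) \<and> (\<gamma> (s0 - h), \<gamma> (s0 + h)) \<noteq> (\<gamma> s0, \<gamma> s0)"
    if "0 < h" "h < e0" for h
  proof -
    have "\<bar>- h\<bar> < e0" "\<bar>h\<bar> < e0" using that by auto
    then obtain s s' where "s \<in> pdom L cl" "\<gamma> (s0 - h) = \<gamma> s" "s' \<in> pdom L cl" "\<gamma> (s0 + h) = \<gamma> s'"
      using local_param by (metis diff_conv_add_uminus)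
    then have "\<gamma> (s0 - h) \<in> \<gamma> ` pdom L cl" "\<gamma> (s0 + h) \<in> \<gamma> ` pdom L cl"
      by (auto intro: rev_image_eqI)
    moreover have "\<gamma> (s0 + - h) \<noteq> \<gamma> (s0 + h)" using local_inj[of "- h" h] that by auto
    ultimately show ?thesis unfolding distinct_pairs_def by auto
  qed
  then show "\<forall>\<^sub>F h in at_right 0. (\<gamma> (s0 - h), \<gamma> (s0 + h)) \<in> distinct_pairs (\<gamma> ` pdom L cl) \<and>
      (\<gamma> (s0 - h), \<gamma> (s0 + h)) \<noteq> (\<gamma> s0, \<gamma> s0)"
    unfolding eventually_at_right_field using right.e0_pos by blast
  show "((\<lambda>h. (\<gamma> (s0 - h), \<gamma> (s0 + h))) \<longlongrightarrow> (\<gamma> s0, \<gamma> s0)) (at_right 0)"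
    by (rule tendsto_Pair[OF tendsto_branches(2,1)])
qed

lemma eventually_distortion_le:
  assumes "0 < \<eta>" "\<eta> < cos (turn_angle \<gamma> s0 / 2)"
  shows "\<forall>\<^sub>F (p, q) in at (\<gamma> s0, \<gamma> s0) within distinct_pairs (\<gamma> ` pdom L cl).
           distortion \<gamma> L cl p q \<le> 1 / (cos (turn_angle \<gamma> s0 / 2) - \<eta>)"
proof -
  define c where "c = cos (turn_angle \<gamma> s0 / 2)"
  obtain \<epsilon> where "0 < \<epsilon>" "\<epsilon> \<le> e0" and chord: "\<And>a b. \<bar>a\<bar> < \<epsilon> \<Longrightarrow> \<bar>b\<bar> < \<epsilon> \<Longrightarrow>
       (c - \<eta>) * \<bar>b - a\<bar> \<le> dist (\<gamma> (s0 + a)) (\<gamma> (s0 + b))"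
    using chord_lower_bound[OF assms(1)] unfolding c_def by blast
  obtain \<rho> where "0 < \<rho>" and near: "\<And>s. s \<in> pdom L cl \<Longrightarrow> dist (\<gamma> s) (\<gamma> s0) < \<rho> \<Longrightarrow>
      \<exists>a. \<bar>a\<bar> < \<epsilon> \<and> \<gamma> (s0 + a) = \<gamma> s"
    using near_points_local[OF \<open>0 < \<epsilon>\<close>] by blast
  have "distortion \<gamma> L cl p q \<le> 1 / (c - \<eta>)"
    if pair: "(p, q) \<in> distinct_pairs (\<gamma> ` pdom L cl)" and close: "dist (p, q) (\<gamma> s0, \<gamma> s0) < \<rho>"
    for p q
  proof -
    have "dist p (\<gamma> s0) < \<rho>" "dist q (\<gamma> s0) < \<rho>"
      using close dist_fst_le[of "(p, q)" "(\<gamma> s0, \<gamma> s0)"] dist_snd_le[of "(p, q)" "(\<gamma> s0, \<gamma> s0)"]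
      by auto
    moreover obtain s s' where "s \<in> pdom L cl" "p = \<gamma> s" "s' \<in> pdom L cl" "q = \<gamma> s'"
      using pair unfolding distinct_pairs_def by blast
    ultimately obtain a b where "\<bar>a\<bar> < \<epsilon>" "\<gamma> (s0 + a) = p" "\<bar>b\<bar> < \<epsilon>" "\<gamma> (s0 + b) = q"
      using near by metis
    moreover have "p \<noteq> q" using pair unfolding distinct_pairs_def by simp
    ultimately have "distortion \<gamma> L cl p q = \<bar>a - b\<bar> / dist p q" "(c - \<eta>) * \<bar>a - b\<bar> \<le> dist p q"
      using Len_local[of a b] chord[of a b] \<open>\<epsilon> \<le> e0\<close> unfolding distortion_def
      by (auto simp: abs_minus_commute)
    moreover have "0 < dist p q" "0 < c - \<eta>" using \<open>p \<noteq> q\<close> assms(2) unfolding c_def by auto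
    ultimately have "distortion \<gamma> L cl p q \<le> dist p q / (c - \<eta>) / dist p q"
      by (simp add: divide_right_mono le_divide_eq mult.commute)
    also have "\<dots> = 1 / (c - \<eta>)" using \<open>0 < dist p q\<close> by simp
    finally show ?thesis .
  qed
  then show ?thesis
    unfolding eventually_at c_def using \<open>0 < \<rho>\<close> by auto
qed

lemma Limsup_distortion_le:
  "Limsup (at (\<gamma> s0, \<gamma> s0) within distinct_pairs (\<gamma> ` pdom L cl)) (\<lambda>(p, q). ereal (distortion \<gamma> L cl p q))
     \<le> esec (turn_angle \<gamma> s0 / 2)"
proof (cases "cos (turn_angle \<gamma> s0 / 2) = 0")
  case False
  define c where "c = cos (turn_angle \<gamma> s0 / 2)"
  have "0 < c"
    using False cos_half_vangle_nonneg[of "T_minus \<gamma> s0" "T_plus \<gamma> s0"]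
    unfolding c_def turn_angle_def by linarith
  have "((\<lambda>\<eta>. c - \<eta>) \<longlongrightarrow> c - 0) (at_right 0)"
    by (rule tendsto_diff[OF tendsto_const tendsto_ident_at])
  then have "((\<lambda>\<eta>. 1 / (c - \<eta>)) \<longlongrightarrow> 1 / (c - 0)) (at_right 0)"
    by (rule tendsto_divide[OF tendsto_const]) (use \<open>0 < c\<close> in simp)
  then have "((\<lambda>\<eta>. ereal (1 / (c - \<eta>))) \<longlongrightarrow> ereal (1 / c)) (at_right 0)"
    by (simp add: tendsto_ereal)
  moreover have "\<forall>\<^sub>F \<eta> in at_right 0. Limsup (at (\<gamma> s0, \<gamma> s0) within distinct_pairs (\<gamma> ` pdom L cl))
      (\<lambda>(p, q). ereal (distortion \<gamma> L cl p q)) \<le> ereal (1 / (c - \<eta>))"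
    unfolding eventually_at_right_field
  proof (intro exI[of _ c] conjI allI impI)
    fix \<eta> :: real assume "0 < \<eta>" "\<eta> < c"
    then show "Limsup (at (\<gamma> s0, \<gamma> s0) within distinct_pairs (\<gamma> ` pdom L cl))
      (\<lambda>(p, q). ereal (distortion \<gamma> L cl p q)) \<le> ereal (1 / (c - \<eta>))"
      by (intro Limsup_bounded eventually_mono[OF eventually_distortion_le[of \<eta>]])
        (auto simp: c_def)
  qed (use \<open>0 < c\<close> in simp)
  ultimately have "Limsup (at (\<gamma> s0, \<gamma> s0) within distinct_pairs (\<gamma> ` pdom L cl))
      (\<lambda>(p, q). ereal (distortion \<gamma> L cl p q)) \<le> ereal (1 / c)"
    by (rule tendsto_lowerbound[OF _ _ trivial_limit_at_right_real])
  then show ?thesis using False unfolding c_def esec_def by simp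
qed (simp add: esec_def)

end

text \<open>At \<open>s0 = 0\<close> on a closed curve the left branch is read off near \<open>L\<close>, using periodicity.\<close>
lemma curve_point_exists:
  fixes \<gamma> :: "real \<Rightarrow> 'a::euclidean_space"
  assumes simple: "simple_curve \<gamma> L cl" and arclength: "arclength_param \<gamma> L"
    and curvature: "finite_total_curvature \<gamma> L cl"
    and s0: "if cl then s0 \<in> {0..<L} else s0 \<in> {0<..<L}"
  obtains e0 K where "curve_point \<gamma> s0 e0 K L cl"
proof -
  have "0 < L" and inj: "inj_on \<gamma> {0..<L}"
    using simple unfolding simple_curve_def by (auto split: if_splits intro: inj_on_subset)
  obtain K where turning: "\<And>n t. strict_partition n t {0..<L} \<Longrightarrow> polygon_turning \<gamma> n t \<le> K"
    using bounded_polygon_turning[OF curvature] by blast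
  define c where "c = (if s0 = 0 then L else s0)"
  define m where "m = min (L / 4) (min c (L - s0))"
  have s0_range: "0 \<le> s0" "s0 < L" "\<not> cl \<Longrightarrow> 0 < s0" using s0 by (auto split: if_splits)
  have "0 < c" "c \<le> L" "\<not> cl \<Longrightarrow> c = s0" using s0_range \<open>0 < L\<close> unfolding c_def by auto
  moreover have "0 < m" using s0_range \<open>0 < c\<close> \<open>0 < L\<close> unfolding m_def by simp
  moreover have "m \<le> L / 4" "m \<le> c" "m \<le> L - s0"
    unfolding m_def by (rule min.cobounded1, (rule min.coboundedI2, simp)+)
  moreover define e0 where "e0 = m / 2"
  ultimately have e0: "0 < e0" "e0 < L / 4" "e0 \<le> c" "s0 + e0 < L" "\<not> cl \<Longrightarrow> e0 < s0"
    by auto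
  have "arclength_branch (\<lambda>h. \<gamma> (s0 + h)) e0 K"
    by (rule arclength_branch_shift[OF inj arclength turning]) (use s0_range e0 in auto)
  moreover have "arclength_branch (\<lambda>h. \<gamma> (s0 - h)) e0 K"
  proof -
    have "\<gamma> (c - h) = \<gamma> (s0 - h)" for h
      using simple s0_range spec[of "\<lambda>s. \<gamma> (s + L) = \<gamma> s" "- h"]
      unfolding c_def simple_curve_def by (auto split: if_splits)
    then have "(\<lambda>h. \<gamma> (c - h)) = (\<lambda>h. \<gamma> (s0 - h))" by simp
    moreover have "arclength_branch (\<lambda>h. \<gamma> (c - h)) e0 K"
      by (rule arclength_branch_reflect[OF inj arclength turning]) (use e0 \<open>c \<le> L\<close> in auto)
    ultimately show ?thesis by simp
  qed
  ultimately have "curve_point \<gamma> s0 e0 K L cl"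
    using simple e0 s0_range
    by (intro curve_point.intro arclength_branch_pair.intro curve_point_axioms.intro) simp_all
  then show ?thesis by (rule that)
qed

theorem lemma7p2:
  fixes \<gamma> :: "real \<Rightarrow> 'a::euclidean_space" and L s0 :: real and cl :: bool
  assumes "simple_curve \<gamma> L cl"
    and "arclength_param \<gamma> L"
    and "finite_total_curvature \<gamma> L cl"
    and "if cl then s0 \<in> {0..<L} else s0 \<in> {0<..<L}"
  defines "r \<equiv> \<gamma> s0"
    and "D \<equiv> {(p, q). p \<in> \<gamma> ` pdom L cl \<and> q \<in> \<gamma> ` pdom L cl \<and> p \<noteq> q}"
  shows "Limsup (at (r, r) within D) (\<lambda>(p, q). ereal (distortion \<gamma> L cl p q))
           = esec (turn_angle \<gamma> s0 / 2)
       \<and> ((\<lambda>h. ereal (distortion \<gamma> L cl (\<gamma> (s0 - h)) (\<gamma> (s0 + h))))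
           \<longlongrightarrow> esec (turn_angle \<gamma> s0 / 2)) (at_right 0)"
proof -
  obtain e0 K where "curve_point \<gamma> s0 e0 K L cl"
    using curve_point_exists[OF assms(1-4)] .
  then interpret curve_point \<gamma> s0 e0 K L cl .
  have D: "D = distinct_pairs (\<gamma> ` pdom L cl)"
    unfolding D_def distinct_pairs_def ..
  have "esec (turn_angle \<gamma> s0 / 2) \<le> Limsup (at (r, r) within D) (\<lambda>(p, q). ereal (distortion \<gamma> L cl p q))"
    unfolding D r_def
    by (rule le_Limsup_if_tendsto_along[OF symmetric_pairs_filterlim trivial_limit_at_right_real])
      (simp add: symmetric_distortion_tendsto)
  then show ?thesis
    using Limsup_distortion_le symmetric_distortion_tendsto unfolding D r_def by (simp add: antisym)
qed

end
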